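(* Let $\lambda\in\Lambda$ with associated $T_\lambda>100$. Let $\psi\in C^\infty([0,\infty))$ with $0\le\psi\le1$, $\psi(x)=0$ for $x\le T_\lambda$ and $\psi(x)=1$ for $x\ge 2T_\lambda$. Define, for $t>0$ (with $H(t)=0$ for $t\le T_\lambda$), $$H(t)=4\Big(\big(\log 2-\tfrac12\big)\lambda''(t)+\int_t^{2t}\frac{\lambda''(s)-\lambda''(t)}{s-t}ds+\lambda''(t)\log\Big(\frac{t}{\lambda(t)}\Big)+\int_{2t}^\infty\frac{\lambda''(s)}{s-t}ds-\frac{\lambda'(t)^2}{2\lambda(t)}\Big)\psi(t),$$ and $\widehat{v_{2,0}}(\xi)=\frac{-1}{\pi\xi}\int_0^\infty H(t)\sin(t\xi)\,dt$ for $\xi>0$. Then for every $k\ge0$ and $N\ge1$ there are constants $C_k,C_{k,N}$ such that $$\xi^k|\widehat{v_{2,0}}^{(k)}(\xi)|\le\begin{cases}C_k\displaystyle\int_{100}^{1/\xi}\frac{\lambda(\sigma)\log(\sigma)}{\sigma}d\sigma+C_k\lambda(\tfrac1\xi)\log(\tfrac1\xi), & \xi\le\frac1{100},\\[2mm] \dfrac{C_{k,N}}{\xi^N}, & \xi>\frac1{100}.\end{cases}$$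
   Context: $\Lambda$ is the set of positive $\lambda\in C^\infty((50,\infty))$ for which there exist $T_\lambda>100$, constants $C_l,C_u,C_2\ge0$ and $C_k\ge0$ ($k\ge3$) such that for all $t\ge T_\lambda$: $-\frac{C_l}{t}\le\frac{\lambda'(t)}{\lambda(t)}\le\frac{C_u}{t}$ and $\frac{|\lambda^{(k)}(t)|}{\lambda(t)}\le\frac{C_k}{t^k}$ for $k\ge2$; and, with $M=\max\{C_l,C_u\}$: (i) $0\le C_u<\frac1{30}-\frac{C_l}{5}$; (ii) $\sqrt{C_\rho}\cdot\frac{179}{267}\Big(M(1+2\|\mathcal K\|_{\mathcal L(L^2_\rho)})+M^2\big(\frac14+2\|[\xi\partial_\xi,\mathcal K]\|_{\mathcal L(L^2_\rho)}+\|\mathcal K\|^2_{\mathcal L(L^2_\rho)}\big)+C_2\big(\frac12+\|\mathcal K\|_{\mathcal L(L^2_\rho)}\big)+4\big(M^2+\frac{C_2}{3}(3+2\pi^2)\big)\Big)<\frac13$; (iii) $M<\frac{1}{3\sqrt{C_\rho}}\cdot\frac{1513}{1044}\cdot\frac{1}{1+2\|\mathcal K\|_{\mathcal L(L^{2,1/2}_\rho)}}$. Here $\mathcal K$ is the Krieger–Schlag–Tataru transference operator (defined by $\mathcal{F}(R\partial_Ru)=-2\xi\partial_\xi\mathcal F u+\mathcal K\mathcal F u$) for the distorted Fourier transform $\mathcal F$ associated with $-\partial_R^2+\frac{3}{4R^2}-\frac{8}{(1+R^2)^2}$ on $L^2((0,\infty),dR)$, with spectral density $\rho$; $L^{2,\alpha}_\rho$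 has norm $\|f\langle\xi\rangle^\alpha\sqrt\rho\|_{L^2(d\xi)}$, $L^2_\rho=L^{2,0}_\rho$; and $C_\rho>0$ is a fixed constant with $\rho(y)/\rho(z)\le C_\rho(y/z+z/y)$ for all $y,z>0$. *)

theory Defs
  imports "HOL-Analysis.Analysis"
begin

definition nderiv :: "nat \<Rightarrow> (real \<Rightarrow> real) \<Rightarrow> real \<Rightarrow> real" where
  "nderiv k f = (deriv ^^ k) f"

definition smooth_on :: "real set \<Rightarrow> (real \<Rightarrow> real) \<Rightarrow> bool" where
  "smooth_on S f \<longleftrightarrow> (\<forall>k. \<forall>x\<in>S. nderiv k f differentiable (at x))"

text \<open>The operator norms of the KST transference operator and the constant C_rho
  are not formalized; they are passed as real parameters
  nK = norm of K on L^2_rho, nComm = norm of the commutator [xi d_xi, K] on L^2_rho,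
  nK12 = norm of K on L^{2,1/2}_rho, Crho = C_rho.\<close>
definition in_Lambda ::
  "real \<Rightarrow> real \<Rightarrow> real \<Rightarrow> real \<Rightarrow> (real \<Rightarrow> real) \<Rightarrow> real \<Rightarrow> bool" where
  "in_Lambda nK nComm nK12 Crho lam T \<longleftrightarrow>
     (\<forall>t>50. lam t > 0) \<and> smooth_on {50<..} lam \<and> T > 100 \<and>
     (\<exists>Cl Cu C2 (C :: nat \<Rightarrow> real).
        Cl \<ge> 0 \<and> Cu \<ge> 0 \<and> C2 \<ge> 0 \<and> (\<forall>k\<ge>3. C k \<ge> 0) \<and> C 2 = C2 \<and>
        (\<forall>t\<ge>T. - Cl / t \<le> nderiv 1 lam t / lam t \<and> nderiv 1 lam t / lam t \<le> Cu / t) \<and>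
        (\<forall>k\<ge>2. \<forall>t\<ge>T. \<bar>nderiv k lam t\<bar> / lam t \<le> C k / t ^ k) \<and>
        (let M = max Cl Cu in
          Cu < 1/30 - Cl/5 \<and>
          sqrt Crho * (179/267) *
            (M * (1 + 2 * nK) + M\<^sup>2 * (1/4 + 2 * nComm + nK\<^sup>2) + C2 * (1/2 + nK)
             + 4 * (M\<^sup>2 + C2/3 * (3 + 2 * pi\<^sup>2))) < 1/3 \<and>
          M < 1 / (3 * sqrt Crho) * (1513/1044) * (1 / (1 + 2 * nK12))))"

definition H_fun :: "(real \<Rightarrow> real) \<Rightarrow> (real \<Rightarrow> real) \<Rightarrow> real \<Rightarrow> real \<Rightarrow> real" where
  "H_fun lam psi T t =
     (if t \<le> T then 0 else
      4 * ((ln 2 - 1/2) * nderiv 2 lam t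
           + integral {t..2*t} (\<lambda>s. (nderiv 2 lam s - nderiv 2 lam t) / (s - t))
           + nderiv 2 lam t * ln (t / lam t)
           + integral {2*t..} (\<lambda>s. nderiv 2 lam s / (s - t))
           - (nderiv 1 lam t)\<^sup>2 / (2 * lam t)) * psi t)"

definition v20_hat :: "(real \<Rightarrow> real) \<Rightarrow> (real \<Rightarrow> real) \<Rightarrow> real \<Rightarrow> real \<Rightarrow> real" where
  "v20_hat lam psi T xi = - 1 / (pi * xi) * integral {0..} (\<lambda>t. H_fun lam psi T t * sin (t * xi))"

end

theory Submission
  imports Defs
begin

text \<open>
  Up to the cutoff \<open>\<psi>\<close>, \<open>H\<close> combines \<open>\<lambda>''\<close>, \<open>\<lambda>'' log (t/\<lambda>)\<close>, \<open>\<lambda>'\<^sup>2/\<lambda>\<close> and two Hilbert-type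
  integrals of \<open>\<lambda>''\<close>. Each of them is a symbol: its \<open>j\<close>-th derivative is \<open>O(w(t) / t\<^sup>j)\<close> with
  \<open>w(t) = \<lambda>(t) log t / t\<^sup>2\<close>, because the bounds \<open>\<bar>\<lambda>\<^sup>(\<^sup>k\<^sup>)\<bar> \<le> C\<^sub>k \<lambda> / t\<^sup>k\<close> defining \<open>\<Lambda>\<close> survive
  products, logarithms and the rescaled Hilbert integrals.

  For a symbol \<open>g\<close> supported in \<open>[T, \<infinity>)\<close> put \<open>V g (\<xi>) = \<xi>\<^sup>-\<^sup>1 \<integral> g(t) sin(t\<xi>) dt\<close>. Integration by
  parts gives \<open>\<xi> \<partial>\<^sub>\<xi> V g = V (-2g - t g')\<close>, and \<open>-2g - t g'\<close> is again a symbol, so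
  \<open>\<xi>\<^sup>k \<partial>\<^sup>k V g = V p\<close> for some symbol \<open>p\<close>. For large \<open>\<xi>\<close>, integrating by parts twice more gains
  \<open>\<xi>\<^sup>-\<^sup>2\<close> each time. For small \<open>\<xi>\<close>, \<open>\<bar>sin(t\<xi>)\<bar>/\<xi> \<le> min t (1/\<xi>)\<close>; below \<open>R = 1/\<xi>\<close> this gives
  \<open>\<integral> \<lambda> log \<sigma> / \<sigma>\<close>, and beyond \<open>R\<close> the growth bound \<open>\<lambda>(t) \<le> \<lambda>(R) (t/R)\<^sup>C\<^sup>u\<close> with
  \<open>Cu < 1/2\<close> makes the tail \<open>O(\<lambda>(R) log R)\<close>.
\<close>

section \<open>Iterated derivatives and smoothness\<close>

lemma nderiv_0 [simp]: "nderiv 0 f = f"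
  by (simp add: nderiv_def)

lemma nderiv_Suc: "nderiv (Suc k) f = nderiv k (deriv f)"
  unfolding nderiv_def funpow_Suc_right by simp

lemma nderiv_Suc_deriv: "nderiv (Suc k) f = deriv (nderiv k f)"
  by (simp add: nderiv_def)

lemma nderiv_nderiv: "nderiv i (nderiv j f) = nderiv (i + j) f"
  by (simp add: nderiv_def funpow_add)

lemma nderiv_cong_open:
  assumes "open S" "\<And>x. x \<in> S \<Longrightarrow> f x = g x" "x \<in> S"
  shows "nderiv k f x = nderiv k g x"
  using assms(2,3)
proof (induction k arbitrary: f g x)
  case 0
  then show ?case by simp
next
  case (Suc k)
  have "deriv f y = deriv g y" if y: "y \<in> S" for y
  proof (rule deriv_cong_ev)
    have "eventually (\<lambda>z. z \<in> S) (nhds y)"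
      using assms(1) y by (simp add: eventually_nhds_in_open)
    then show "eventually (\<lambda>z. f z = g z) (nhds y)"
      by (rule eventually_mono) (use Suc.prems in auto)
  qed simp
  then show ?case
    unfolding nderiv_Suc using Suc by blast
qed

lemma differentiable_cong_open:
  fixes f g :: "real \<Rightarrow> real"
  assumes "f differentiable (at x)" "open S" "\<And>x. x \<in> S \<Longrightarrow> f x = g x" "x \<in> S"
  shows "g differentiable (at x)"
proof -
  obtain D where "(f has_real_derivative D) (at x)"
    using assms(1) by (auto simp: real_differentiable_def)
  then have "(g has_real_derivative D) (at x)"
    by (rule has_field_derivative_transform_within_open[OF _ assms(2,4)]) (use assms(3) in auto)
  then show ?thesis
    by (auto simp: real_differentiable_def)
qed

lemma smooth_on_cong_open:
  assumes "open S" "\<And>x. x \<in> S \<Longrightarrow> f x = g x" "smooth_on S f"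
  shows "smooth_on S g"
  unfolding smooth_on_def
proof (intro allI ballI)
  fix k x
  assume x: "x \<in> S"
  show "nderiv k g differentiable (at x)"
    by (rule differentiable_cong_open[of "nderiv k f" _ S])
       (use nderiv_cong_open[OF assms(1,2)] assms(1,3) x in \<open>auto simp: smooth_on_def\<close>)
qed

lemma smooth_on_subset: "smooth_on S f \<Longrightarrow> S' \<subseteq> S \<Longrightarrow> smooth_on S' f"
  by (auto simp: smooth_on_def)

lemma smooth_on_deriv: "smooth_on S f \<Longrightarrow> smooth_on S (deriv f)"
  unfolding smooth_on_def by (metis nderiv_Suc)

lemma smooth_on_nderiv: "smooth_on S f \<Longrightarrow> smooth_on S (nderiv j f)"
  unfolding smooth_on_def by (metis nderiv_nderiv)

lemma smooth_on_has_real_derivative_nderiv: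
  assumes "smooth_on S f" "x \<in> S"
  shows "(nderiv k f has_real_derivative nderiv (Suc k) f x) (at x)"
proof -
  have "nderiv k f differentiable (at x)"
    using assms by (auto simp: smooth_on_def)
  then show ?thesis
    unfolding nderiv_Suc_deriv by (simp add: DERIV_deriv_iff_real_differentiable)
qed

lemma smooth_on_has_real_derivative:
  assumes "smooth_on S f" "x \<in> S"
  shows "(f has_real_derivative deriv f x) (at x)"
  using smooth_on_has_real_derivative_nderiv[OF assms, of 0] by (simp add: nderiv_Suc)

lemma smooth_on_continuous_on:
  assumes "smooth_on S f" "A \<subseteq> S"
  shows "continuous_on A (nderiv k f)"
  using assms by (meson DERIV_isCont continuous_at_imp_continuous_on
      smooth_on_has_real_derivative_nderiv subsetD)

lemma nderiv_Suc_antiderivative: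
  assumes "open S" "\<And>x. x \<in> S \<Longrightarrow> (f has_real_derivative g x) (at x)" "x \<in> S"
  shows "nderiv (Suc k) f x = nderiv k g x"
  unfolding nderiv_Suc
  by (rule nderiv_cong_open[OF assms(1) _ assms(3)]) (use assms(2) DERIV_imp_deriv in blast)

lemma smooth_on_antiderivative:
  assumes "open S" "\<And>x. x \<in> S \<Longrightarrow> (f has_real_derivative g x) (at x)" "smooth_on S g"
  shows "smooth_on S f"
  unfolding smooth_on_def
proof (intro allI ballI)
  fix k x
  assume x: "x \<in> S"
  show "nderiv k f differentiable (at x)"
  proof (cases k)
    case 0
    then show ?thesis
      using assms(2)[OF x] by (auto simp: real_differentiable_def)
  next
    case (Suc k')
    show ?thesis
      unfolding Suc
      by (rule differentiable_cong_open[of "nderiv k' g" _ S])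
         (use nderiv_Suc_antiderivative[OF assms(1,2)] assms(1,3) x in \<open>auto simp: smooth_on_def\<close>)
  qed
qed

lemma nderiv_linear:
  assumes "open S" "smooth_on S f" "smooth_on S g" "x \<in> S"
  shows "nderiv k (\<lambda>x. a * f x + b * g x) x = a * nderiv k f x + b * nderiv k g x"
  using assms(2-4)
proof (induction k arbitrary: f g x)
  case 0
  then show ?case by simp
next
  case (Suc k)
  have "nderiv k (deriv (\<lambda>x. a * f x + b * g x)) x = nderiv k (\<lambda>x. a * deriv f x + b * deriv g x) x"
  proof (rule nderiv_cong_open[OF assms(1) _ Suc.prems(3)])
    fix y
    assume y: "y \<in> S"
    show "deriv (\<lambda>x. a * f x + b * g x) y = a * deriv f y + b * deriv g y"
      using smooth_on_has_real_derivative[OF Suc.prems(1) y]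
        smooth_on_has_real_derivative[OF Suc.prems(2) y]
      by (auto intro!: DERIV_imp_deriv derivative_eq_intros)
  qed
  also have "\<dots> = a * nderiv k (deriv f) x + b * nderiv k (deriv g) x"
    using Suc.IH[OF smooth_on_deriv[OF Suc.prems(1)] smooth_on_deriv[OF Suc.prems(2)] Suc.prems(3)] .
  finally show ?case
    by (simp add: nderiv_Suc)
qed

lemma smooth_on_linear:
  assumes "open S" "smooth_on S f" "smooth_on S g"
  shows "smooth_on S (\<lambda>x. a * f x + b * g x)"
  unfolding smooth_on_def
proof (intro allI ballI)
  fix k x
  assume x: "x \<in> S"
  have "(\<lambda>x. a * nderiv k f x + b * nderiv k g x) differentiable (at x)"
    using assms x unfolding smooth_on_def by (auto intro!: derivative_intros)
  then show "nderiv k (\<lambda>x. a * f x + b * g x) differentiable (at x)"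
    by (rule differentiable_cong_open[OF _ assms(1) _ x]) (use nderiv_linear[OF assms] in auto)
qed

lemma nderiv_cmult:
  "open S \<Longrightarrow> smooth_on S f \<Longrightarrow> x \<in> S \<Longrightarrow> nderiv k (\<lambda>x. a * f x) x = a * nderiv k f x"
  using nderiv_linear[of S f f x k a 0] by simp

lemma smooth_on_cmult: "open S \<Longrightarrow> smooth_on S f \<Longrightarrow> smooth_on S (\<lambda>x. a * f x)"
  using smooth_on_linear[of S f f a 0] by simp

lemma nderiv_const: "nderiv k (\<lambda>x::real. c::real) = (\<lambda>x. if k = 0 then c else 0)"
proof (induction k)
  case (Suc k)
  then show ?case
    by (cases k) (auto simp: nderiv_Suc_deriv)
qed simp

lemma smooth_on_const: "smooth_on S (\<lambda>x. c)"
  unfolding smooth_on_def nderiv_const by simp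

lemma nderiv_ident: "nderiv k (\<lambda>x::real. x) = (\<lambda>x. if k = 0 then x else if k = 1 then 1 else 0)"
proof -
  have "deriv (\<lambda>x::real. x) = (\<lambda>x. 1)"
    by (auto intro!: ext DERIV_imp_deriv derivative_eq_intros)
  then show ?thesis
    by (cases k) (auto simp: nderiv_Suc nderiv_const)
qed

lemma smooth_on_ident: "smooth_on S (\<lambda>x. x)"
  unfolding smooth_on_def nderiv_ident
proof (intro allI ballI)
  fix k and x :: real
  show "(\<lambda>x::real. if k = 0 then x else if k = 1 then 1 else 0) differentiable (at x)"
    by (cases "k = 0"; cases "k = 1") auto
qed

text \<open>\<open>C\<^sup>n\<close> regularity, needed to run the inductions for products and compositions.\<close>

definition smooth_upto :: "nat \<Rightarrow> real set \<Rightarrow> (real \<Rightarrow> real) \<Rightarrow> bool" where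
  "smooth_upto n S f \<longleftrightarrow> (\<forall>i<n. \<forall>x\<in>S. nderiv i f differentiable (at x))"

lemma smooth_upto_mono: "smooth_upto n S f \<Longrightarrow> m \<le> n \<Longrightarrow> smooth_upto m S f"
  unfolding smooth_upto_def by auto

lemma smooth_on_imp_smooth_upto: "smooth_on S f \<Longrightarrow> smooth_upto n S f"
  unfolding smooth_upto_def smooth_on_def by auto

lemma smooth_on_iff_smooth_upto: "smooth_on S f \<longleftrightarrow> (\<forall>n. smooth_upto n S f)"
  unfolding smooth_upto_def smooth_on_def by (meson lessI)

lemma smooth_upto_has_real_derivative_nderiv:
  assumes "smooth_upto (Suc k) S f" "x \<in> S"
  shows "(nderiv k f has_real_derivative nderiv (Suc k) f x) (at x)"
proof -
  have "nderiv k f differentiable (at x)"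
    using assms by (auto simp: smooth_upto_def)
  then show ?thesis
    unfolding nderiv_Suc_deriv by (simp add: DERIV_deriv_iff_real_differentiable)
qed

lemma binomial_Suc_sum_step:
  fixes F G :: "nat \<Rightarrow> real"
  shows "(\<Sum>i = 0..n. real (n choose i) * (F (Suc i) * G (n - i) + G (Suc (n - i)) * F i)) =
    G 0 * F (Suc n) + (\<Sum>i = 0..n. F i * (real (Suc n choose i) * G (Suc n - i)))"
proof -
  have choose: "Suc n choose k = (n choose k) + (if k = 0 then 0 else n choose (k - 1))" for k
    by (cases k) simp_all
  show ?thesis
    apply (simp add: choose algebra_simps sum.distrib)
    apply (subst (4) sum_Suc_reindex)
    apply (auto simp: algebra_simps Suc_diff_le intro: sum.cong)
    done
qed

lemma nderiv_mult_upto: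
  assumes "open S" "smooth_upto k S f" "smooth_upto k S g" "x \<in> S"
  shows "nderiv k (\<lambda>x. f x * g x) x =
    (\<Sum>i = 0..k. real (k choose i) * nderiv i f x * nderiv (k - i) g x)"
  using assms(2-4)
proof (induction k arbitrary: x)
  case 0
  then show ?case by simp
next
  case (Suc n z)
  have fn: "smooth_upto n S f" "smooth_upto n S g"
    using Suc.prems smooth_upto_mono by (metis le_SucI order_refl)+
  have df: "\<And>i y. i \<le> n \<Longrightarrow> y \<in> S \<Longrightarrow> (nderiv i f has_real_derivative nderiv (Suc i) f y) (at y)"
    and dg: "\<And>i y. i \<le> n \<Longrightarrow> y \<in> S \<Longrightarrow> (nderiv i g has_real_derivative nderiv (Suc i) g y) (at y)"
    by (rule smooth_upto_has_real_derivative_nderiv; use Suc.prems smooth_upto_mono in force)+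
  have dsum: "((\<lambda>w. \<Sum>i = 0..n. real (n choose i) * nderiv i f w * nderiv (n - i) g w) has_real_derivative
      (\<Sum>i = 0..n. real (n choose i) *
        (nderiv (Suc i) f z * nderiv (n - i) g z + nderiv (Suc (n - i)) g z * nderiv i f z))) (at z)"
  proof (rule DERIV_sum)
    fix i
    assume i: "i \<in> {0..n}"
    have "((\<lambda>w. real (n choose i) * (nderiv i f w * nderiv (n - i) g w)) has_real_derivative
      real (n choose i) * (nderiv (Suc i) f z * nderiv (n - i) g z + nderiv (Suc (n - i)) g z * nderiv i f z)) (at z)"
      by (rule DERIV_cmult, rule DERIV_mult) (use i df[of _ z] dg[of _ z] Suc.prems(3) in auto)
    then show "((\<lambda>w. real (n choose i) * nderiv i f w * nderiv (n - i) g w) has_real_derivative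
      real (n choose i) * (nderiv (Suc i) f z * nderiv (n - i) g z + nderiv (Suc (n - i)) g z * nderiv i f z)) (at z)"
      by (simp add: mult.assoc)
  qed
  have "(nderiv n (\<lambda>w. f w * g w) has_real_derivative
      (\<Sum>i = 0..Suc n. real (Suc n choose i) * nderiv i f z * nderiv (Suc n - i) g z)) (at z)"
  proof (rule has_field_derivative_transform_within_open[OF _ \<open>open S\<close> Suc.prems(3)])
    show "\<And>y. y \<in> S \<Longrightarrow> (\<Sum>i = 0..n. real (n choose i) * nderiv i f y * nderiv (n - i) g y) =
        nderiv n (\<lambda>w. f w * g w) y"
      using Suc.IH[OF fn] by simp
    have "(\<Sum>i = 0..Suc n. real (Suc n choose i) * nderiv i f z * nderiv (Suc n - i) g z)
       = g z * nderiv (Suc n) f z + (\<Sum>i = 0..n. nderiv i f z * (real (Suc n choose i) * nderiv (Suc n - i) g z))"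
      by (subst sum.atLeast0_atMost_Suc) (simp add: algebra_simps)
    then show "((\<lambda>w. \<Sum>i = 0..n. real (n choose i) * nderiv i f w * nderiv (n - i) g w) has_real_derivative
        (\<Sum>i = 0..Suc n. real (Suc n choose i) * nderiv i f z * nderiv (Suc n - i) g z)) (at z)"
      using dsum binomial_Suc_sum_step[of n "\<lambda>i. nderiv i f z" "\<lambda>i. nderiv i g z"]
      by (simp add: add.commute mult.commute)
  qed
  then show ?case
    unfolding nderiv_Suc_deriv by (simp add: DERIV_imp_deriv)
qed

lemma smooth_upto_mult:
  assumes "open S" "smooth_upto n S f" "smooth_upto n S g"
  shows "smooth_upto n S (\<lambda>x. f x * g x)"
  unfolding smooth_upto_def
proof (intro allI impI ballI)
  fix k x
  assume k: "k < n" and x: "x \<in> S"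
  have fk: "smooth_upto k S f" "smooth_upto k S g"
    using assms k smooth_upto_mono by (metis less_imp_le)+
  have "\<forall>i\<in>{0..k}. (\<lambda>x. real (k choose i) * nderiv i f x * nderiv (k - i) g x) differentiable (at x)"
  proof
    fix i
    assume i: "i \<in> {0..k}"
    have "nderiv i f differentiable (at x)" "nderiv (k - i) g differentiable (at x)"
      using assms(2,3) k x i unfolding smooth_upto_def by auto
    then show "(\<lambda>x. real (k choose i) * nderiv i f x * nderiv (k - i) g x) differentiable (at x)"
      by (intro differentiable_mult differentiable_const)
  qed
  from differentiable_sum[OF finite_atLeastAtMost this]
  show "nderiv k (\<lambda>x. f x * g x) differentiable (at x)"
    by (rule differentiable_cong_open[OF _ assms(1) _ x]) (use nderiv_mult_upto[OF assms(1) fk] in auto)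
qed

lemma smooth_on_mult:
  assumes "open S" "smooth_on S f" "smooth_on S g"
  shows "smooth_on S (\<lambda>x. f x * g x)"
  using assms smooth_upto_mult unfolding smooth_on_iff_smooth_upto by blast

lemma nderiv_mult:
  "open S \<Longrightarrow> smooth_on S f \<Longrightarrow> smooth_on S g \<Longrightarrow> x \<in> S \<Longrightarrow>
   nderiv k (\<lambda>x. f x * g x) x = (\<Sum>i = 0..k. real (k choose i) * nderiv i f x * nderiv (k - i) g x)"
  by (rule nderiv_mult_upto) (auto intro: smooth_on_imp_smooth_upto)

lemma smooth_upto_compose:
  assumes S: "open S" and f: "smooth_on S f" and fS: "\<And>x. x \<in> S \<Longrightarrow> f x \<in> V"
    and g: "smooth_on V g"
  shows "smooth_upto n S (\<lambda>x. g (f x))"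
  using g
proof (induction n arbitrary: g)
  case 0
  then show ?case by (simp add: smooth_upto_def)
next
  case (Suc n)
  have chain: "((\<lambda>x. g (f x)) has_real_derivative deriv g (f y) * deriv f y) (at y)" if y: "y \<in> S" for y
    using DERIV_chain2[OF smooth_on_has_real_derivative[OF Suc.prems fS[OF y]]
        smooth_on_has_real_derivative[OF f y]] .
  have up: "smooth_upto n S (\<lambda>y. deriv g (f y) * deriv f y)"
    by (rule smooth_upto_mult[OF S])
       (use Suc.IH smooth_on_deriv[OF Suc.prems] smooth_on_imp_smooth_upto smooth_on_deriv[OF f] in auto)
  show "smooth_upto (Suc n) S (\<lambda>x. g (f x))"
    unfolding smooth_upto_def
  proof (intro allI impI ballI)
    fix i x
    assume i: "i < Suc n" and x: "x \<in> S"
    show "nderiv i (\<lambda>x. g (f x)) differentiable (at x)"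
    proof (cases i)
      case 0
      then show ?thesis
        using chain[OF x] by (auto simp: real_differentiable_def)
    next
      case (Suc i')
      have "nderiv i' (\<lambda>y. deriv g (f y) * deriv f y) differentiable (at x)"
        using up i x Suc by (auto simp: smooth_upto_def)
      then show ?thesis
        by (rule differentiable_cong_open[OF _ S _ x]) (use Suc nderiv_Suc_antiderivative[OF S chain] in auto)
    qed
  qed
qed

lemma smooth_on_compose:
  assumes "open S" "smooth_on S f" "\<And>x. x \<in> S \<Longrightarrow> f x \<in> V" "smooth_on V g"
  shows "smooth_on S (\<lambda>x. g (f x))"
  unfolding smooth_on_iff_smooth_upto using smooth_upto_compose[OF assms] by blast

lemma nderiv_powr:
  assumes "x > 0"
  shows "nderiv k (\<lambda>x. x powr a) x = (\<Prod>i<k. (a - real i)) * x powr (a - real k)"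
  using assms
proof (induction k arbitrary: x)
  case 0
  then show ?case by simp
next
  case (Suc k)
  have "nderiv (Suc k) (\<lambda>x. x powr a) x = deriv (\<lambda>x. (\<Prod>i<k. (a - real i)) * x powr (a - real k)) x"
    unfolding nderiv_Suc_deriv
    by (rule deriv_cong_ev) (use Suc eventually_nhds_in_open[of "{0<..}" x] in \<open>auto elim!: eventually_mono\<close>)
  also have "\<dots> = (\<Prod>i<k. (a - real i)) * ((a - real k) * x powr (a - real k - 1))"
    by (rule DERIV_imp_deriv) (use Suc.prems in \<open>auto intro!: derivative_eq_intros\<close>)
  finally show ?case
    by (simp add: algebra_simps)
qed

lemma smooth_on_powr: "smooth_on {0<..} (\<lambda>x. x powr a)"
  unfolding smooth_on_def
proof (intro allI ballI)
  fix k and x :: real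
  assume x: "x \<in> {0<..}"
  have "((\<lambda>x. x powr (a - real k)) has_real_derivative (a - real k) * x powr (a - real k - 1)) (at x)"
    using x by (auto intro!: derivative_eq_intros)
  then have "(\<lambda>x. (\<Prod>i<k. (a - real i)) * x powr (a - real k)) differentiable (at x)"
    by (intro differentiable_mult differentiable_const) (auto simp: real_differentiable_def)
  then show "nderiv k (\<lambda>x. x powr a) differentiable (at x)"
    by (rule differentiable_cong_open[of _ _ "{0<..}"]) (use x nderiv_powr in auto)
qed

lemma smooth_on_inverse: "smooth_on {0<..} (\<lambda>x. 1 / x)"
  by (rule smooth_on_cong_open[OF _ _ smooth_on_powr[of "-1"]]) (auto simp: powr_minus_divide)

section \<open>Improper integrals and differentiation under the integral sign\<close>

lemma abs_diff_le_deriv_bound: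
  fixes g g' :: "real \<Rightarrow> real"
  assumes "convex U" "\<And>x. x \<in> U \<Longrightarrow> (g has_real_derivative g' x) (at x)"
    "\<And>x. x \<in> U \<Longrightarrow> \<bar>g' x\<bar> \<le> B" "a \<in> U" "b \<in> U"
  shows "\<bar>g b - g a\<bar> \<le> B * \<bar>b - a\<bar>"
  using field_differentiable_bound[OF assms(1), of g g' B b a] assms
  by (auto intro: has_field_derivative_at_within)

lemma abs_difference_quotient_le:
  fixes g g' :: "real \<Rightarrow> real"
  assumes "convex U" "\<And>x. x \<in> U \<Longrightarrow> (g has_real_derivative g' x) (at x)"
    "\<And>x. x \<in> U \<Longrightarrow> \<bar>g' x\<bar> \<le> B" "a \<in> U" "b \<in> U"
  shows "\<bar>(g b - g a) / (b - a)\<bar> \<le> B"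
proof (cases "b = a")
  case True
  then show ?thesis
    using assms(3)[of a] assms(4) by auto
next
  case False
  then show ?thesis
    using abs_diff_le_deriv_bound[OF assms] by (simp add: abs_divide divide_le_eq)
qed

lemma tendsto_integral_difference_quotient:
  fixes f f' :: "real \<Rightarrow> real \<Rightarrow> real" and h :: "real \<Rightarrow> real"
  assumes U: "open U" "convex U" "x0 \<in> U"
    and deriv: "\<And>x t. x \<in> U \<Longrightarrow> t \<in> S \<Longrightarrow> ((\<lambda>x. f x t) has_real_derivative f' x t) (at x)"
    and integrable: "\<And>x. x \<in> U \<Longrightarrow> f x integrable_on S"
    and majorant: "h integrable_on S" "\<And>x t. x \<in> U \<Longrightarrow> t \<in> S \<Longrightarrow> \<bar>f' x t\<bar> \<le> h t"
    and X: "\<And>k. X k \<noteq> x0" "X \<longlonglongrightarrow> x0"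
  shows "(\<lambda>k. (integral S (f (X k)) - integral S (f x0)) / (X k - x0)) \<longlonglongrightarrow> integral S (f' x0)"
proof -
  define q where "q k = (\<lambda>t. if X k \<in> U then (f (X k) t - f x0 t) / (X k - x0) else 0)" for k
  have evU: "eventually (\<lambda>k. X k \<in> U) sequentially"
    using X(2) U(1,3) by (simp add: tendsto_def)
  have "q k integrable_on S" for k
    unfolding q_def using integrable[of "X k"] integrable[OF U(3)] X(1)[of k]
    by (cases "X k \<in> U") (simp_all add: integrable_diff integrable_0)
  moreover have "norm (q k t) \<le> h t" if t: "t \<in> S" for k t
  proof -
    have "0 \<le> h t"
      using majorant(2)[OF U(3) t] by (meson abs_ge_zero order_trans)
    then show ?thesis
      unfolding q_def using abs_difference_quotient_le[OF U(2), of "\<lambda>x. f x t" "\<lambda>x. f' x t" "h t" x0 "X k"]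
      by (simp add: deriv majorant(2) t U(3))
  qed
  moreover have "(\<lambda>k. q k t) \<longlonglongrightarrow> f' x0 t" if t: "t \<in> S" for t
  proof -
    have "((\<lambda>y. (f y t - f x0 t) / (y - x0)) \<longlongrightarrow> f' x0 t) (at x0)"
      using deriv[OF U(3) t] by (simp add: has_field_derivative_iff)
    then have "((\<lambda>y. (f y t - f x0 t) / (y - x0)) \<circ> X) \<longlonglongrightarrow> f' x0 t"
      using X by (auto simp: tendsto_at_iff_sequentially)
    then show ?thesis
      by (rule Lim_transform_eventually) (use evU in \<open>auto simp: q_def elim!: eventually_mono\<close>)
  qed
  ultimately have "(\<lambda>k. integral S (q k)) \<longlonglongrightarrow> integral S (f' x0)"
    using dominated_convergence(2)[of q S h "f' x0"] majorant(1) by auto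
  moreover have "eventually (\<lambda>k. integral S (q k) =
      (integral S (f (X k)) - integral S (f x0)) / (X k - x0)) sequentially"
    using evU by eventually_elim (use integrable U(3) in \<open>simp add: q_def integral_diff\<close>)
  ultimately show ?thesis
    by (rule Lim_transform_eventually)
qed

lemma has_real_derivative_integral_dominated:
  fixes f f' :: "real \<Rightarrow> real \<Rightarrow> real" and h :: "real \<Rightarrow> real"
  assumes "open U" "convex U" "x0 \<in> U"
    and "\<And>x t. x \<in> U \<Longrightarrow> t \<in> S \<Longrightarrow> ((\<lambda>x. f x t) has_real_derivative f' x t) (at x)"
    and "\<And>x. x \<in> U \<Longrightarrow> f x integrable_on S"
    and "h integrable_on S" "\<And>x t. x \<in> U \<Longrightarrow> t \<in> S \<Longrightarrow> \<bar>f' x t\<bar> \<le> h t"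
  shows "((\<lambda>x. integral S (f x)) has_real_derivative integral S (f' x0)) (at x0)"
  unfolding has_field_derivative_iff tendsto_at_iff_sequentially
  using tendsto_integral_difference_quotient[OF assms] by (auto simp: o_def)

lemma absolutely_integrable_continuous_dominated:
  fixes f g :: "real \<Rightarrow> real"
  assumes "continuous_on S f" "S \<in> sets lebesgue" "g integrable_on S" "\<And>x. x \<in> S \<Longrightarrow> \<bar>f x\<bar> \<le> g x"
  shows "f absolutely_integrable_on S"
proof -
  have "f integrable_on S"
    by (rule measurable_bounded_by_integrable_imp_integrable_real
        [OF continuous_imp_measurable_on_sets_lebesgue[OF assms(1,2)] assms(3,4,2)])
  then show ?thesis
    using absolutely_integrable_integrable_bound[of S f g] assms(3,4) by auto
qed

lemma abs_integral_le_integral: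
  fixes f g :: "real \<Rightarrow> real"
  assumes "f integrable_on S" "g integrable_on S" "\<And>x. x \<in> S \<Longrightarrow> \<bar>f x\<bar> \<le> g x"
  shows "\<bar>integral S f\<bar> \<le> integral S g"
  using integral_norm_bound_integral[of f S g] assms by simp

lemma tendsto_integral_atLeastAtMost_real:
  fixes f :: "real \<Rightarrow> real"
  assumes "f absolutely_integrable_on {a..}"
  shows "(\<lambda>n. integral {a..real n} f) \<longlonglongrightarrow> integral {a..} f"
proof -
  have fi: "f integrable_on {a..}" and ni: "(\<lambda>x. norm (f x)) integrable_on {a..}"
    using assms by (auto simp: absolutely_integrable_on_def)
  define fn where "fn n x = (if x \<in> {..real n} then f x else 0)" for n x
  have "(\<lambda>k. integral {a..} (fn k)) \<longlonglongrightarrow> integral {a..} f"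
  proof (rule dominated_convergence(2)[OF _ ni])
    show "fn k integrable_on {a..}" for k
    proof -
      have "{..real k} \<inter> {a..} = {a..real k}"
        by auto
      then have "f integrable_on {..real k} \<inter> {a..}"
        using integrable_on_subinterval[OF fi, of a "real k"] by auto
      then show ?thesis
        unfolding fn_def by (rule integrable_restrict_Int[THEN iffD2])
    qed
    show "norm (fn k x) \<le> norm (f x)" for k x
      by (simp add: fn_def)
    show "(\<lambda>k. fn k x) \<longlonglongrightarrow> f x" for x
    proof -
      obtain N where "real N \<ge> x"
        using real_arch_simple by blast
      then have "eventually (\<lambda>k. f x = fn k x) sequentially"
        unfolding eventually_sequentially fn_def by (intro exI[of _ N]) auto
      then show ?thesis
        by (rule Lim_transform_eventually[OF tendsto_const])
    qed
  qed
  moreover have "integral {a..} (fn k) = integral {a..real k} f" for k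
    unfolding fn_def integral_restrict_Int by (simp add: Int_commute atLeastAtMost_def)
  ultimately show ?thesis
    by simp
qed

lemma integral_atLeast_antiderivative:
  fixes f F :: "real \<Rightarrow> real"
  assumes "f absolutely_integrable_on {a..}" "\<And>x. a \<le> x \<Longrightarrow> (F has_real_derivative f x) (at x)"
    "(F \<longlongrightarrow> L) at_top"
  shows "integral {a..} f = L - F a"
proof -
  have "eventually (\<lambda>n. a \<le> real n) sequentially"
    using filterlim_real_sequentially by (simp add: filterlim_at_top)
  then have "eventually (\<lambda>n. F (real n) - F a = integral {a..real n} f) sequentially"
  proof eventually_elim
    case (elim n)
    have "(f has_integral (F (real n) - F a)) {a..real n}"
      using elim assms(2)
      by (intro fundamental_theorem_of_calculus)
         (auto intro: has_field_derivative_at_within simp flip: has_real_derivative_iff_has_vector_derivative)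
    then show ?case
      by (simp add: integral_unique)
  qed
  moreover have "(\<lambda>n. F (real n) - F a) \<longlonglongrightarrow> L - F a"
    by (intro tendsto_diff filterlim_compose[OF assms(3) filterlim_real_sequentially] tendsto_const)
  ultimately have "(\<lambda>n. integral {a..real n} f) \<longlonglongrightarrow> L - F a"
    by (rule Lim_transform_eventually[rotated])
  then show ?thesis
    using LIMSEQ_unique[OF tendsto_integral_atLeastAtMost_real[OF assms(1)]] by blast
qed

section \<open>Symbol classes\<close>

locale symbol_calculus =
  fixes S :: "real set" and T :: real
  assumes open_domain: "open S" and T_pos: "0 < T" and atLeast_T_subset: "{T..} \<subseteq> S"
begin

lemma ge_T_pos_in_domain: "T \<le> t \<Longrightarrow> 0 < t \<and> t \<in> S"
  using T_pos atLeast_T_subset by auto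

definition weight :: "(real \<Rightarrow> real) \<Rightarrow> bool" where
  "weight u \<longleftrightarrow> (\<forall>t\<ge>T. 0 \<le> u t)"

definition symbol :: "(real \<Rightarrow> real) \<Rightarrow> (real \<Rightarrow> real) \<Rightarrow> bool" where
  "symbol u f \<longleftrightarrow> smooth_on S f \<and> (\<forall>j. \<exists>c. \<forall>t\<ge>T. \<bar>nderiv j f t\<bar> \<le> c * u t / t ^ j)"

lemma weight_const: "0 \<le> c \<Longrightarrow> weight (\<lambda>t. c)"
  unfolding weight_def by simp

lemma weight_mult: "weight u \<Longrightarrow> weight v \<Longrightarrow> weight (\<lambda>t. u t * v t)"
  unfolding weight_def by simp

lemma weight_ident: "weight (\<lambda>t. t)"
  unfolding weight_def using T_pos by simp

lemma weight_inverse: "weight (\<lambda>t. 1 / t)"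
  unfolding weight_def using T_pos by simp

lemma weight_powr: "weight (\<lambda>t. t powr a)"
  unfolding weight_def by simp

lemma weight_divide: "weight u \<Longrightarrow> weight (\<lambda>t. u t / t ^ m)"
  unfolding weight_def using ge_T_pos_in_domain by (auto intro!: divide_nonneg_pos)

lemma symbol_smooth_on: "symbol u f \<Longrightarrow> smooth_on S f"
  by (simp add: symbol_def)

lemma symbol_boundE:
  assumes "symbol u f" "weight u"
  obtains c where "0 \<le> c" "\<And>t. T \<le> t \<Longrightarrow> \<bar>nderiv j f t\<bar> \<le> c * u t / t ^ j"
proof -
  obtain c where c: "\<And>t. T \<le> t \<Longrightarrow> \<bar>nderiv j f t\<bar> \<le> c * u t / t ^ j"
    using assms unfolding symbol_def by blast
  have "c * u t / t ^ j \<le> max c 0 * u t / t ^ j" if "T \<le> t" for t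
    using assms(2) ge_T_pos_in_domain[OF that] that unfolding weight_def
    by (intro divide_right_mono mult_right_mono) auto
  then show ?thesis
    using c that[of "max c 0"] by force
qed

lemma symbol_boundsE:
  assumes "symbol u f" "weight u"
  obtains c where "\<And>j. 0 \<le> c j" "\<And>j t. T \<le> t \<Longrightarrow> \<bar>nderiv j f t\<bar> \<le> c j * u t / t ^ j"
proof -
  have "\<forall>j. \<exists>c. 0 \<le> c \<and> (\<forall>t\<ge>T. \<bar>nderiv j f t\<bar> \<le> c * u t / t ^ j)"
    by (meson assms symbol_boundE)
  then obtain c where "\<forall>j. 0 \<le> c j \<and> (\<forall>t\<ge>T. \<bar>nderiv j f t\<bar> \<le> c j * u t / t ^ j)"
    by (metis choice)
  then show ?thesis
    using that by blast
qed

lemma symbol_cong: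
  assumes "symbol u f" "\<And>t. t \<in> S \<Longrightarrow> f t = g t"
  shows "symbol u g"
proof -
  have "nderiv j f t = nderiv j g t" if "T \<le> t" for j t
    by (rule nderiv_cong_open[OF open_domain assms(2)]) (use ge_T_pos_in_domain[OF that] in auto)
  moreover have "smooth_on S g"
    using assms smooth_on_cong_open[OF open_domain assms(2)] by (simp add: symbol_def)
  ultimately show ?thesis
    using assms(1) unfolding symbol_def by simp
qed

lemma symbol_linear:
  assumes "symbol u f" "symbol u g" "weight u"
  shows "symbol u (\<lambda>t. a * f t + b * g t)"
  unfolding symbol_def
proof (intro conjI allI)
  show "smooth_on S (\<lambda>t. a * f t + b * g t)"
    using assms open_domain by (simp add: symbol_def smooth_on_linear)
  fix j
  obtain c where c: "0 \<le> c" "\<And>t. T \<le> t \<Longrightarrow> \<bar>nderiv j f t\<bar> \<le> c * u t / t ^ j"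
    using symbol_boundE[OF assms(1,3)] by blast
  obtain d where d: "0 \<le> d" "\<And>t. T \<le> t \<Longrightarrow> \<bar>nderiv j g t\<bar> \<le> d * u t / t ^ j"
    using symbol_boundE[OF assms(2,3)] by blast
  show "\<exists>c. \<forall>t\<ge>T. \<bar>nderiv j (\<lambda>t. a * f t + b * g t) t\<bar> \<le> c * u t / t ^ j"
  proof (intro exI[of _ "\<bar>a\<bar> * c + \<bar>b\<bar> * d"] allI impI)
    fix t
    assume t: "T \<le> t"
    have "nderiv j (\<lambda>t. a * f t + b * g t) t = a * nderiv j f t + b * nderiv j g t"
      using assms open_domain nderiv_linear ge_T_pos_in_domain[OF t] by (auto simp: symbol_def)
    also have "\<bar>\<dots>\<bar> \<le> \<bar>a\<bar> * \<bar>nderiv j f t\<bar> + \<bar>b\<bar> * \<bar>nderiv j g t\<bar>"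
      by (simp add: abs_mult[symmetric] abs_triangle_ineq)
    also have "\<dots> \<le> \<bar>a\<bar> * (c * u t / t ^ j) + \<bar>b\<bar> * (d * u t / t ^ j)"
      using c(2)[OF t] d(2)[OF t] by (intro add_mono mult_left_mono) auto
    finally show "\<bar>nderiv j (\<lambda>t. a * f t + b * g t) t\<bar> \<le> (\<bar>a\<bar> * c + \<bar>b\<bar> * d) * u t / t ^ j"
      by (simp add: add_divide_distrib algebra_simps)
  qed
qed

lemma symbol_mono:
  assumes "symbol u f" "weight u" "\<And>t. T \<le> t \<Longrightarrow> u t \<le> K * v t"
  shows "symbol v f"
  unfolding symbol_def
proof (intro conjI allI)
  show "smooth_on S f"
    using assms by (simp add: symbol_def)
  fix j
  obtain c where c: "0 \<le> c" "\<And>t. T \<le> t \<Longrightarrow> \<bar>nderiv j f t\<bar> \<le> c * u t / t ^ j"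
    using symbol_boundE[OF assms(1,2)] by blast
  have "\<bar>nderiv j f t\<bar> \<le> c * K * v t / t ^ j" if t: "T \<le> t" for t
  proof -
    have "c * u t / t ^ j \<le> c * (K * v t) / t ^ j"
      using assms(3)[OF t] c(1) ge_T_pos_in_domain[OF t] by (intro divide_right_mono mult_left_mono) auto
    then show ?thesis
      using c(2)[OF t] by (simp add: mult.assoc)
  qed
  then show "\<exists>c. \<forall>t\<ge>T. \<bar>nderiv j f t\<bar> \<le> c * v t / t ^ j"
    by blast
qed

lemma symbol_deriv:
  assumes "symbol u f"
  shows "symbol (\<lambda>t. u t / t) (deriv f)"
  unfolding symbol_def
proof (intro conjI allI)
  show "smooth_on S (deriv f)"
    using assms by (auto simp: symbol_def intro: smooth_on_deriv)
  fix j
  obtain c where "\<And>t. T \<le> t \<Longrightarrow> \<bar>nderiv (Suc j) f t\<bar> \<le> c * u t / t ^ Suc j"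
    using assms unfolding symbol_def by blast
  then show "\<exists>c. \<forall>t\<ge>T. \<bar>nderiv j (deriv f) t\<bar> \<le> c * (u t / t) / t ^ j"
    by (intro exI[of _ c]) (auto simp: nderiv_Suc field_simps)
qed

lemma symbol_antiderivative:
  assumes "\<And>x. x \<in> S \<Longrightarrow> (f has_real_derivative g x) (at x)" "symbol (\<lambda>t. u t / t) g"
    "\<And>t. T \<le> t \<Longrightarrow> \<bar>f t\<bar> \<le> c * u t"
  shows "symbol u f"
  unfolding symbol_def
proof (intro conjI allI)
  have g: "smooth_on S g"
    using assms(2) by (simp add: symbol_def)
  show "smooth_on S f"
    by (rule smooth_on_antiderivative[OF open_domain assms(1) g])
  fix j
  show "\<exists>c. \<forall>t\<ge>T. \<bar>nderiv j f t\<bar> \<le> c * u t / t ^ j"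
  proof (cases j)
    case 0
    then show ?thesis
      using assms(3) by auto
  next
    case (Suc k)
    obtain c where c: "\<And>t. T \<le> t \<Longrightarrow> \<bar>nderiv k g t\<bar> \<le> c * (u t / t) / t ^ k"
      using assms(2) unfolding symbol_def by blast
    have "\<bar>nderiv j f t\<bar> \<le> c * u t / t ^ j" if t: "T \<le> t" for t
      using c[OF t] Suc nderiv_Suc_antiderivative[OF open_domain assms(1)] ge_T_pos_in_domain[OF t]
      by (simp add: field_simps)
    then show ?thesis
      by blast
  qed
qed

lemma symbol_mult:
  assumes "symbol u f" "symbol v g" "weight u" "weight v"
  shows "symbol (\<lambda>t. u t * v t) (\<lambda>t. f t * g t)"
  unfolding symbol_def
proof (intro conjI allI)
  have f: "smooth_on S f" and g: "smooth_on S g"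
    using assms by (auto simp: symbol_def)
  show "smooth_on S (\<lambda>t. f t * g t)"
    by (rule smooth_on_mult[OF open_domain f g])
  obtain cf where cf: "\<And>i. 0 \<le> cf i" "\<And>i t. T \<le> t \<Longrightarrow> \<bar>nderiv i f t\<bar> \<le> cf i * u t / t ^ i"
    using symbol_boundsE[OF assms(1,3)] by blast
  obtain cg where cg: "\<And>i. 0 \<le> cg i" "\<And>i t. T \<le> t \<Longrightarrow> \<bar>nderiv i g t\<bar> \<le> cg i * v t / t ^ i"
    using symbol_boundsE[OF assms(2,4)] by blast
  fix j
  define c where "c = (\<Sum>i = 0..j. real (j choose i) * cf i * cg (j - i))"
  have "\<bar>nderiv j (\<lambda>t. f t * g t) t\<bar> \<le> c * (u t * v t) / t ^ j" if t: "T \<le> t" for t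
  proof -
    have "nderiv j (\<lambda>t. f t * g t) t = (\<Sum>i = 0..j. real (j choose i) * nderiv i f t * nderiv (j - i) g t)"
      by (rule nderiv_mult[OF open_domain f g]) (use ge_T_pos_in_domain[OF t] in auto)
    also have "\<bar>\<dots>\<bar> \<le> (\<Sum>i = 0..j. \<bar>real (j choose i) * nderiv i f t * nderiv (j - i) g t\<bar>)"
      by (rule sum_abs)
    also have "\<dots> \<le> (\<Sum>i = 0..j. real (j choose i) * cf i * cg (j - i) * (u t * v t) / t ^ j)"
    proof (rule sum_mono)
      fix i
      assume i: "i \<in> {0..j}"
      have "\<bar>real (j choose i) * nderiv i f t * nderiv (j - i) g t\<bar>
          = real (j choose i) * (\<bar>nderiv i f t\<bar> * \<bar>nderiv (j - i) g t\<bar>)"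
        by (simp add: abs_mult)
      also have "\<dots> \<le> real (j choose i) * ((cf i * u t / t ^ i) * (cg (j - i) * v t / t ^ (j - i)))"
        using cf(2)[OF t, of i] cg(2)[OF t, of "j - i"] by (intro mult_left_mono mult_mono) auto
      also have "\<dots> = real (j choose i) * cf i * cg (j - i) * (u t * v t) / (t ^ i * t ^ (j - i))"
        by (simp add: field_simps)
      also have "t ^ i * t ^ (j - i) = t ^ j"
        using i by (simp add: power_add[symmetric])
      finally show "\<bar>real (j choose i) * nderiv i f t * nderiv (j - i) g t\<bar> \<le>
          real (j choose i) * cf i * cg (j - i) * (u t * v t) / t ^ j" .
    qed
    also have "\<dots> = c * (u t * v t) / t ^ j"
      by (simp add: c_def sum_distrib_right sum_divide_distrib)
    finally show ?thesis .
  qed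
  then show "\<exists>c. \<forall>t\<ge>T. \<bar>nderiv j (\<lambda>t. f t * g t) t\<bar> \<le> c * (u t * v t) / t ^ j"
    by blast
qed

lemma symbol_ident: "symbol (\<lambda>t. t) (\<lambda>t. t)"
  unfolding symbol_def
proof (intro conjI allI)
  show "smooth_on S (\<lambda>t. t)"
    by (rule smooth_on_ident)
  fix j
  have "\<bar>nderiv j (\<lambda>t. t) t\<bar> \<le> 1 * t / t ^ j" if "T \<le> t" for t
    using ge_T_pos_in_domain[OF that] by (auto simp: nderiv_ident)
  then show "\<exists>c. \<forall>t\<ge>T. \<bar>nderiv j (\<lambda>t. t) t\<bar> \<le> c * t / t ^ j"
    by blast
qed

lemma symbol_powr:
  assumes "S \<subseteq> {0<..}"
  shows "symbol (\<lambda>t. t powr a) (\<lambda>t. t powr a)"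
  unfolding symbol_def
proof (intro conjI allI)
  show "smooth_on S (\<lambda>t. t powr a)"
    by (rule smooth_on_subset[OF smooth_on_powr assms])
  fix j
  have "\<bar>nderiv j (\<lambda>t. t powr a) t\<bar> \<le> \<bar>\<Prod>i<j. (a - real i)\<bar> * t powr a / t ^ j" if "T \<le> t" for t
    using ge_T_pos_in_domain[OF that] by (simp add: nderiv_powr powr_diff powr_realpow abs_mult)
  then show "\<exists>c. \<forall>t\<ge>T. \<bar>nderiv j (\<lambda>t. t powr a) t\<bar> \<le> c * t powr a / t ^ j"
    by blast
qed

lemma ln_ge_1:
  assumes "exp 1 \<le> T" "T \<le> t"
  shows "1 \<le> ln t"
  using assms T_pos by (simp add: ln_ge_iff)

lemma weight_ln: "exp 1 \<le> T \<Longrightarrow> weight (\<lambda>t. ln t)"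
  unfolding weight_def using ln_ge_1 by force

lemma symbol_ln:
  assumes "S \<subseteq> {0<..}" "exp 1 \<le> T"
  shows "symbol (\<lambda>t. ln t) (\<lambda>t. ln t)"
proof (rule symbol_antiderivative[where g = "\<lambda>t. t powr (-1)" and c = 1])
  show "((\<lambda>t. ln t) has_real_derivative x powr (-1)) (at x)" if "x \<in> S" for x
    using that assms(1) by (auto intro!: derivative_eq_intros simp: powr_minus_divide)
  show "symbol (\<lambda>t. ln t / t) (\<lambda>t. t powr - 1)"
  proof (rule symbol_mono[OF symbol_powr[OF assms(1)] weight_powr, where K = 1])
    fix t
    assume t: "T \<le> t"
    then show "t powr - 1 \<le> 1 * (ln t / t)"
      using ln_ge_1[OF assms(2) t] ge_T_pos_in_domain[OF t] by (simp add: powr_minus_divide divide_right_mono)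
  qed
  show "\<bar>ln t\<bar> \<le> 1 * ln t" if "T \<le> t" for t
    using ln_ge_1[OF assms(2) that] by simp
qed

end

section \<open>Sine transforms of symbols\<close>

locale sine_transform = symbol_calculus UNIV T for T +
  fixes w :: "real \<Rightarrow> real"
  assumes weight_w: "weight w" and integrable_w: "w integrable_on {T..}"
    and w_tendsto_0: "(w \<longlongrightarrow> 0) at_top"
begin

definition W :: "real \<Rightarrow> real" where
  "W t = (if T \<le> t then w t else 0)"

lemma integrable_W: "(\<lambda>t. c * W t) integrable_on {0..}"
proof -
  have "{T..} \<inter> {0..} = {T..}"
    using T_pos by auto
  then have "w integrable_on {T..} \<inter> {0..}"
    using integrable_w by simp
  then have "W integrable_on {0..}"
    unfolding W_def using integrable_restrict_Int[of "{T..}" w "{0..}"] by simp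
  then show ?thesis
    using integrable_cmul[of W "{0..}" c] by simp
qed

definition admissible :: "(real \<Rightarrow> real) \<Rightarrow> bool" where
  "admissible g \<longleftrightarrow> symbol w g \<and> (\<forall>t<T. g t = 0)"

lemma admissible_smooth_on: "admissible g \<Longrightarrow> smooth_on UNIV g"
  by (simp add: admissible_def symbol_def)

lemma admissible_nderiv_eq_0:
  assumes "admissible g" "t < T"
  shows "nderiv j g t = 0"
proof -
  have "nderiv j g t = nderiv j (\<lambda>x. 0) t"
    by (rule nderiv_cong_open[of "{..<T}"]) (use assms in \<open>auto simp: admissible_def\<close>)
  then show ?thesis
    by (simp add: nderiv_const)
qed

lemma admissible_abs_le_W:
  assumes "admissible g"
  obtains c where "0 \<le> c" "\<And>t. \<bar>g t\<bar> \<le> c * W t"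
proof -
  obtain c where c: "0 \<le> c" "\<And>t. T \<le> t \<Longrightarrow> \<bar>nderiv 0 g t\<bar> \<le> c * w t / t ^ 0"
    using symbol_boundE[OF _ weight_w] assms unfolding admissible_def by blast
  have "\<bar>g t\<bar> \<le> c * W t" for t
    using c(2)[of t] assms by (cases "T \<le> t") (auto simp: W_def admissible_def)
  then show ?thesis
    using that c(1) by blast
qed

lemma admissible_linear:
  "admissible f \<Longrightarrow> admissible g \<Longrightarrow> admissible (\<lambda>t. a * f t + b * g t)"
  unfolding admissible_def by (simp add: symbol_linear weight_w)

lemma admissible_deriv:
  assumes "admissible g"
  shows "admissible (deriv g)"
  unfolding admissible_def
proof
  have "symbol (\<lambda>t. w t / t) (deriv g)"
    using assms by (simp add: admissible_def symbol_deriv)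
  then show "symbol w (deriv g)"
  proof (rule symbol_mono[where K = "1 / T"])
    show "weight (\<lambda>t. w t / t)"
      using weight_divide[OF weight_w, of 1] by simp
    show "w t / t \<le> 1 / T * w t" if "T \<le> t" for t
      using that T_pos weight_w unfolding weight_def
      by (simp add: divide_left_mono mult.commute[of "1 / T"])
  qed
  show "\<forall>t<T. deriv g t = 0"
    using admissible_nderiv_eq_0[OF assms, of _ 1] by (simp add: nderiv_Suc)
qed

lemma admissible_ident_mult_deriv:
  assumes "admissible g"
  shows "admissible (\<lambda>t. t * deriv g t)"
  unfolding admissible_def
proof
  have g': "symbol (\<lambda>t. w t / t) (deriv g)"
    using assms by (simp add: admissible_def symbol_deriv)
  have "weight (\<lambda>t. w t / t)"
    using weight_divide[OF weight_w, of 1] by simp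
  with g' have "symbol (\<lambda>t. t * (w t / t)) (\<lambda>t. t * deriv g t)"
    by (intro symbol_mult symbol_ident weight_ident)
  then show "symbol w (\<lambda>t. t * deriv g t)"
  proof (rule symbol_mono[where K = 1])
    show "weight (\<lambda>t. t * (w t / t))"
      using weight_w ge_T_pos_in_domain by (auto simp: weight_def)
  qed (auto dest: ge_T_pos_in_domain)
  show "\<forall>t<T. t * deriv g t = 0"
    using admissible_nderiv_eq_0[OF assms, of _ 1] by (simp add: nderiv_Suc)
qed

lemma admissible_tendsto_0:
  assumes "admissible g"
  shows "(g \<longlongrightarrow> 0) at_top"
proof -
  obtain c where c: "0 \<le> c" "\<And>t. \<bar>g t\<bar> \<le> c * W t"
    using admissible_abs_le_W[OF assms] by blast
  have "eventually (\<lambda>t. norm (g t) \<le> c * w t) at_top"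
    using eventually_ge_at_top[of T]
  proof eventually_elim
    case (elim t)
    then show ?case
      using c(2)[of t] by (simp add: W_def)
  qed
  moreover have "((\<lambda>t. c * w t) \<longlongrightarrow> 0) at_top"
    using tendsto_mult_right_zero[OF w_tendsto_0] by simp
  ultimately show ?thesis
    by (rule Lim_null_comparison)
qed

lemma absolutely_integrable_admissible_mult:
  assumes "admissible g" "continuous_on UNIV k" "\<And>t. \<bar>k t\<bar> \<le> B"
  shows "(\<lambda>t. g t * k t) absolutely_integrable_on {0..}"
proof -
  obtain c where c: "0 \<le> c" "\<And>t. \<bar>g t\<bar> \<le> c * W t"
    using admissible_abs_le_W[OF assms(1)] by blast
  have B: "0 \<le> B"
    using assms(3)[of 0] by linarith
  show ?thesis
  proof (rule absolutely_integrable_continuous_dominated[where g = "\<lambda>t. (B * c) * W t"])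
    show "continuous_on {0..} (\<lambda>t. g t * k t)"
      using smooth_on_continuous_on[OF admissible_smooth_on[OF assms(1)], of _ 0] assms(2)
      by (auto intro!: continuous_intros intro: continuous_on_subset)
    show "\<bar>g t * k t\<bar> \<le> B * c * W t" for t
    proof -
      have "0 \<le> c * W t"
        using c(2)[of t] by (meson abs_ge_zero order_trans)
      then have "\<bar>g t\<bar> * \<bar>k t\<bar> \<le> c * W t * B"
        using c(2)[of t] assms(3)[of t] by (intro mult_mono) auto
      then show ?thesis
        by (simp add: abs_mult algebra_simps)
    qed
  qed (auto intro: integrable_W)
qed

lemma integrable_admissible_mult_sin:
  assumes "admissible g"
  shows "(\<lambda>t. g t * sin (t * \<xi>)) integrable_on {0..}"
proof -
  have "(\<lambda>t. g t * sin (t * \<xi>)) absolutely_integrable_on {0..}"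
    by (rule absolutely_integrable_admissible_mult[OF assms, where B = 1]) (auto intro!: continuous_intros)
  then show ?thesis
    by (simp add: absolutely_integrable_on_def)
qed

lemma integrable_admissible_mult_cos:
  assumes "admissible g"
  shows "(\<lambda>t. g t * cos (t * \<xi>)) integrable_on {0..}"
proof -
  have "(\<lambda>t. g t * cos (t * \<xi>)) absolutely_integrable_on {0..}"
    by (rule absolutely_integrable_admissible_mult[OF assms, where B = 1]) (auto intro!: continuous_intros)
  then show ?thesis
    by (simp add: absolutely_integrable_on_def)
qed

definition sin_transform :: "(real \<Rightarrow> real) \<Rightarrow> real \<Rightarrow> real" where
  "sin_transform g \<xi> = integral {0..} (\<lambda>t. g t * sin (t * \<xi>))"

definition cos_transform :: "(real \<Rightarrow> real) \<Rightarrow> real \<Rightarrow> real" where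
  "cos_transform g \<xi> = integral {0..} (\<lambda>t. g t * cos (t * \<xi>))"

text \<open>Up to the factor \<open>-1/\<pi>\<close>, \<open>vhat H\<close> is the paper's \<open>\<^bold>v\<^sub>2\<^sub>,\<^sub>0\<close>.\<close>

definition vhat :: "(real \<Rightarrow> real) \<Rightarrow> real \<Rightarrow> real" where
  "vhat g \<xi> = sin_transform g \<xi> / \<xi>"

lemma sin_transform_linear:
  assumes "admissible f" "admissible g"
  shows "sin_transform (\<lambda>t. a * f t + b * g t) \<xi> = a * sin_transform f \<xi> + b * sin_transform g \<xi>"
proof -
  have "sin_transform (\<lambda>t. a * f t + b * g t) \<xi> =
      integral {0..} (\<lambda>t. a * (f t * sin (t * \<xi>)) + b * (g t * sin (t * \<xi>)))"
    unfolding sin_transform_def by (simp add: algebra_simps)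
  also have "\<dots> = a * sin_transform f \<xi> + b * sin_transform g \<xi>"
    unfolding sin_transform_def
    using integrable_cmul[OF integrable_admissible_mult_sin[OF assms(1)], of a \<xi>]
      integrable_cmul[OF integrable_admissible_mult_sin[OF assms(2)], of b \<xi>]
    by (simp add: integral_add)
  finally show ?thesis .
qed

lemma vhat_linear:
  "admissible f \<Longrightarrow> admissible g \<Longrightarrow> vhat (\<lambda>t. a * f t + b * g t) \<xi> = a * vhat f \<xi> + b * vhat g \<xi>"
  unfolding vhat_def by (simp add: sin_transform_linear add_divide_distrib)

text \<open>The boundary terms vanish because \<open>g\<close> vanishes near \<open>0\<close> and at infinity.\<close>

lemma admissible_integration_by_parts:
  assumes g: "admissible g"
    and K: "\<And>t. (K has_real_derivative k t) (at t)" "continuous_on UNIV k"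
      "\<And>t. \<bar>k t\<bar> \<le> B" "\<And>t. \<bar>K t\<bar> \<le> B"
  shows "integral {0..} (\<lambda>t. g t * k t) = - integral {0..} (\<lambda>t. deriv g t * K t)"
proof -
  have K_cont: "continuous_on UNIV K"
    using K(1) by (meson DERIV_isCont continuous_at_imp_continuous_on)
  have gk: "(\<lambda>t. g t * k t) absolutely_integrable_on {0..}"
    by (rule absolutely_integrable_admissible_mult[OF g K(2,3)])
  have g'K: "(\<lambda>t. deriv g t * K t) absolutely_integrable_on {0..}"
    by (rule absolutely_integrable_admissible_mult[OF admissible_deriv[OF g] K_cont K(4)])
  have "((\<lambda>t. g t * K t) has_real_derivative g t * k t + deriv g t * K t) (at t)" for t
    using smooth_on_has_real_derivative[OF admissible_smooth_on[OF g]] K(1)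
    by (auto intro!: derivative_eq_intros)
  moreover have "((\<lambda>t. g t * K t) \<longlongrightarrow> 0) at_top"
  proof (rule Lim_null_comparison)
    show "eventually (\<lambda>t. norm (g t * K t) \<le> \<bar>g t\<bar> * B) at_top"
      using K(4) by (simp add: abs_mult mult_left_mono)
    show "((\<lambda>t. \<bar>g t\<bar> * B) \<longlongrightarrow> 0) at_top"
      using tendsto_mult_left_zero[OF tendsto_rabs_zero[OF admissible_tendsto_0[OF g]]] .
  qed
  ultimately have "integral {0..} (\<lambda>t. g t * k t + deriv g t * K t) = 0 - g 0 * K 0"
    using gk g'K by (intro integral_atLeast_antiderivative) (auto intro: set_integral_add(1))
  moreover have "g 0 = 0"
    using g T_pos by (simp add: admissible_def)
  ultimately show ?thesis
    using gk g'K by (simp add: integral_add absolutely_integrable_on_def eq_neg_iff_add_eq_0)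
qed

lemma sin_transform_eq_cos_transform_deriv:
  assumes g: "admissible g" and \<xi>: "\<xi> \<noteq> 0"
  shows "sin_transform g \<xi> = cos_transform (deriv g) \<xi> / \<xi>"
proof -
  have "integral {0..} (\<lambda>t. g t * sin (t * \<xi>)) =
      - integral {0..} (\<lambda>t. deriv g t * (- cos (t * \<xi>) / \<xi>))"
    by (rule admissible_integration_by_parts[OF g, where B = "max 1 (1 / \<bar>\<xi>\<bar>)"])
       (use \<xi> in \<open>auto intro!: derivative_eq_intros continuous_intros
         simp: abs_divide divide_le_eq le_max_iff_disj\<close>)
  then show ?thesis
    unfolding sin_transform_def cos_transform_def by simp
qed

lemma cos_transform_eq_sin_transform_deriv:
  assumes g: "admissible g" and \<xi>: "\<xi> \<noteq> 0"
  shows "cos_transform g \<xi> = - sin_transform (deriv g) \<xi> / \<xi>"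
proof -
  have "integral {0..} (\<lambda>t. g t * cos (t * \<xi>)) =
      - integral {0..} (\<lambda>t. deriv g t * (sin (t * \<xi>) / \<xi>))"
    by (rule admissible_integration_by_parts[OF g, where B = "max 1 (1 / \<bar>\<xi>\<bar>)"])
       (use \<xi> in \<open>auto intro!: derivative_eq_intros continuous_intros
         simp: abs_divide divide_le_eq le_max_iff_disj\<close>)
  then show ?thesis
    unfolding sin_transform_def cos_transform_def by simp
qed

lemma cos_transform_deriv_has_real_derivative:
  assumes g: "admissible g"
  shows "((\<lambda>\<xi>. cos_transform (deriv g) \<xi>) has_real_derivative - sin_transform (\<lambda>t. t * deriv g t) \<xi>) (at \<xi>)"
proof -
  obtain c where c: "0 \<le> c" "\<And>t. \<bar>t * deriv g t\<bar> \<le> c * W t"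
    using admissible_abs_le_W[OF admissible_ident_mult_deriv[OF g]] by blast
  have "((\<lambda>\<xi>. integral {0..} (\<lambda>t. deriv g t * cos (t * \<xi>))) has_real_derivative
      integral {0..} (\<lambda>t. - (t * deriv g t * sin (t * \<xi>)))) (at \<xi>)"
  proof (rule has_real_derivative_integral_dominated[where U = UNIV and h = "\<lambda>t. c * W t"])
    fix x t :: real
    show "((\<lambda>x. deriv g t * cos (t * x)) has_real_derivative - (t * deriv g t * sin (t * x))) (at x)"
      by (auto intro!: derivative_eq_intros simp: algebra_simps)
    have "\<bar>t * deriv g t * sin (t * x)\<bar> \<le> \<bar>t * deriv g t\<bar>"
      by (simp add: abs_mult mult_left_le)
    then show "\<bar>- (t * deriv g t * sin (t * x))\<bar> \<le> c * W t"
      using c(2)[of t] by simp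
  qed (auto intro: integrable_W integrable_admissible_mult_cos admissible_deriv[OF g])
  then show ?thesis
    unfolding cos_transform_def sin_transform_def by simp
qed

text \<open>\<open>\<xi> \<partial>\<^sub>\<xi>\<close> acting on \<open>vhat g\<close> corresponds to \<open>-2 - t \<partial>\<^sub>t\<close> acting on \<open>g\<close>.\<close>

definition dilation_adjoint :: "(real \<Rightarrow> real) \<Rightarrow> real \<Rightarrow> real" where
  "dilation_adjoint g = (\<lambda>t. (-2) * g t + (-1) * (t * deriv g t))"

lemma admissible_dilation_adjoint: "admissible g \<Longrightarrow> admissible (dilation_adjoint g)"
  unfolding dilation_adjoint_def by (intro admissible_linear admissible_ident_mult_deriv)

lemma vhat_has_real_derivative:
  assumes g: "admissible g" and \<xi>: "0 < \<xi>"
  shows "(vhat g has_real_derivative vhat (dilation_adjoint g) \<xi> / \<xi>) (at \<xi>)"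
proof -
  have vhat_eq: "vhat g y = cos_transform (deriv g) y / y\<^sup>2" if "y \<in> {0<..}" for y
    using sin_transform_eq_cos_transform_deriv[OF g, of y] that by (simp add: vhat_def power2_eq_square)
  have "((\<lambda>y. cos_transform (deriv g) y / y\<^sup>2) has_real_derivative
      (- sin_transform (\<lambda>t. t * deriv g t) \<xi> * \<xi>\<^sup>2 - cos_transform (deriv g) \<xi> * (2 * \<xi>)) / (\<xi>\<^sup>2 * \<xi>\<^sup>2))
      (at \<xi>)"
    using \<xi> by (auto intro!: derivative_eq_intros cos_transform_deriv_has_real_derivative[OF g]
        simp: power2_eq_square)
  moreover have "(- sin_transform (\<lambda>t. t * deriv g t) \<xi> * \<xi>\<^sup>2 - cos_transform (deriv g) \<xi> * (2 * \<xi>)) /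
      (\<xi>\<^sup>2 * \<xi>\<^sup>2) = vhat (dilation_adjoint g) \<xi> / \<xi>"
  proof -
    have E: "sin_transform (dilation_adjoint g) \<xi> = -2 * sin_transform g \<xi> - sin_transform (\<lambda>t. t * deriv g t) \<xi>"
      unfolding dilation_adjoint_def
      using sin_transform_linear[OF g admissible_ident_mult_deriv[OF g], of "-2" "-1" \<xi>] by simp
    have C: "cos_transform (deriv g) \<xi> = \<xi> * sin_transform g \<xi>"
      using sin_transform_eq_cos_transform_deriv[OF g, of \<xi>] \<xi> by simp
    have "(- sin_transform (\<lambda>t. t * deriv g t) \<xi> * \<xi>\<^sup>2 - \<xi> * sin_transform g \<xi> * (2 * \<xi>)) /
        (\<xi>\<^sup>2 * \<xi>\<^sup>2) = (-2 * sin_transform g \<xi> - sin_transform (\<lambda>t. t * deriv g t) \<xi>) / \<xi> / \<xi>"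
      using \<xi> by (simp add: field_simps power2_eq_square)
    then show ?thesis
      by (simp only: vhat_def E C)
  qed
  ultimately have "((\<lambda>y. cos_transform (deriv g) y / y\<^sup>2) has_real_derivative vhat (dilation_adjoint g) \<xi> / \<xi>)
      (at \<xi>)"
    by simp
  then show ?thesis
    by (rule has_field_derivative_transform_within_open[of _ _ _ "{0<..}"]) (use \<xi> vhat_eq in auto)
qed

lemma nderiv_vhat:
  assumes "admissible g"
  obtains p where "admissible p" "\<And>\<xi>. 0 < \<xi> \<Longrightarrow> nderiv k (vhat g) \<xi> = vhat p \<xi> / \<xi> ^ k"
  using that
proof (induction k arbitrary: thesis)
  case 0
  then show ?case
    using assms by simp
next
  case (Suc k)
  obtain p where p: "admissible p" "\<And>\<xi>. 0 < \<xi> \<Longrightarrow> nderiv k (vhat g) \<xi> = vhat p \<xi> / \<xi> ^ k"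
    using Suc.IH by blast
  define p' where "p' = (\<lambda>t. 1 * dilation_adjoint p t + (- real k) * p t)"
  have "nderiv (Suc k) (vhat g) \<xi> = vhat p' \<xi> / \<xi> ^ Suc k" if \<xi>: "0 < \<xi>" for \<xi>
  proof -
    have "nderiv (Suc k) (vhat g) \<xi> = deriv (\<lambda>y. vhat p y / y ^ k) \<xi>"
      unfolding nderiv_Suc_deriv
      by (rule deriv_cong_ev) (use p(2) \<xi> eventually_nhds_in_open[of "{0<..}" \<xi>] in \<open>auto elim!: eventually_mono\<close>)
    also have "\<dots> = (vhat (dilation_adjoint p) \<xi> / \<xi> * \<xi> ^ k - vhat p \<xi> * (real k * \<xi> ^ (k - 1))) /
        (\<xi> ^ k * \<xi> ^ k)"
      by (rule DERIV_imp_deriv) (use \<xi> in \<open>auto intro!: derivative_eq_intros vhat_has_real_derivative[OF p(1)]\<close>)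
    also have "\<dots> = (vhat (dilation_adjoint p) \<xi> - real k * vhat p \<xi>) / \<xi> ^ Suc k"
    proof -
      have "real k * \<xi> ^ (k - 1) = real k * \<xi> ^ k / \<xi>"
        using \<xi> by (cases k) auto
      then show ?thesis
        using \<xi> unfolding \<open>real k * \<xi> ^ (k - 1) = real k * \<xi> ^ k / \<xi>\<close> by (simp add: field_simps)
    qed
    also have "\<dots> = vhat p' \<xi> / \<xi> ^ Suc k"
      unfolding p'_def vhat_linear[OF admissible_dilation_adjoint[OF p(1)] p(1)] by simp
    finally show ?thesis .
  qed
  moreover have "admissible p'"
    unfolding p'_def by (intro admissible_linear admissible_dilation_adjoint p(1))
  ultimately show ?case
    using Suc.prems by blast
qed

lemma nderiv_vhat_differentiable:
  assumes g: "admissible g" and \<xi>: "0 < \<xi>"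
  shows "nderiv k (vhat g) differentiable (at \<xi>)"
proof -
  obtain p where p: "admissible p" "\<And>\<xi>. 0 < \<xi> \<Longrightarrow> nderiv k (vhat g) \<xi> = vhat p \<xi> / \<xi> ^ k"
    using nderiv_vhat[OF g] by blast
  have "(\<lambda>y. vhat p y / y ^ k) differentiable (at \<xi>)"
    using DERIV_divide[OF vhat_has_real_derivative[OF p(1) \<xi>] DERIV_pow[of k \<xi>]] \<xi>
    by (auto simp: real_differentiable_def)
  then show ?thesis
    by (rule differentiable_cong_open[of _ _ "{0<..}"]) (use p(2) \<xi> in auto)
qed

text \<open>Integrating by parts twice gains a factor \<open>\<xi>\<^sup>-\<^sup>2\<close>.\<close>

lemma sin_transform_decay:
  assumes "admissible p"
  shows "\<exists>c. \<forall>\<xi>>0. \<bar>sin_transform p \<xi>\<bar> \<le> c / \<xi> ^ (2 * n)"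
  using assms
proof (induction n arbitrary: p)
  case 0
  obtain c where c: "0 \<le> c" "\<And>t. \<bar>p t\<bar> \<le> c * W t"
    using admissible_abs_le_W[OF "0.prems"] by blast
  have "\<bar>sin_transform p \<xi>\<bar> \<le> integral {0..} (\<lambda>t. c * W t)" for \<xi>
    unfolding sin_transform_def
  proof (rule abs_integral_le_integral)
    show "\<bar>p t * sin (t * \<xi>)\<bar> \<le> c * W t" for t
    proof -
      have "\<bar>p t\<bar> * \<bar>sin (t * \<xi>)\<bar> \<le> \<bar>p t\<bar>"
        by (simp add: mult_left_le)
      then show ?thesis
        using c(2)[of t] by (simp add: abs_mult)
    qed
  qed (auto intro: integrable_W integrable_admissible_mult_sin "0.prems")
  then show ?case
    by auto
next
  case (Suc n)
  have p'': "admissible (deriv (deriv p))"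
    using Suc.prems by (intro admissible_deriv)
  obtain c where c: "\<And>\<xi>. 0 < \<xi> \<Longrightarrow> \<bar>sin_transform (deriv (deriv p)) \<xi>\<bar> \<le> c / \<xi> ^ (2 * n)"
    using Suc.IH[OF p''] by blast
  have "\<bar>sin_transform p \<xi>\<bar> \<le> c / \<xi> ^ (2 * Suc n)" if \<xi>: "0 < \<xi>" for \<xi>
  proof -
    have "sin_transform p \<xi> = - sin_transform (deriv (deriv p)) \<xi> / \<xi>\<^sup>2"
      using sin_transform_eq_cos_transform_deriv[OF Suc.prems, of \<xi>]
        cos_transform_eq_sin_transform_deriv[OF admissible_deriv[OF Suc.prems], of \<xi>] \<xi>
      by (simp add: power2_eq_square)
    then have "\<bar>sin_transform p \<xi>\<bar> = \<bar>sin_transform (deriv (deriv p)) \<xi>\<bar> / \<xi>\<^sup>2"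
      by (simp add: abs_divide)
    also have "\<dots> \<le> (c / \<xi> ^ (2 * n)) / \<xi>\<^sup>2"
      using c[OF \<xi>] by (intro divide_right_mono) auto
    also have "\<dots> = c / \<xi> ^ (2 * Suc n)"
      by (simp add: power_add field_simps power2_eq_square)
    finally show ?thesis .
  qed
  then show ?case
    by blast
qed

text \<open>The small-frequency estimate uses only \<open>\<bar>sin (t \<xi>)\<bar> / \<xi> \<le> min t (1 / \<xi>)\<close>.\<close>

lemma abs_vhat_le_integral_majorant:
  assumes p: "admissible p"
  obtains c where "0 \<le> c" "\<And>\<xi> B. 0 < \<xi> \<Longrightarrow> B integrable_on {0..} \<Longrightarrow> (\<And>t. 0 \<le> t \<Longrightarrow> 0 \<le> B t) \<Longrightarrow>
      (\<And>t. T \<le> t \<Longrightarrow> c * w t * min t (1 / \<xi>) \<le> B t) \<Longrightarrow> \<bar>vhat p \<xi>\<bar> \<le> integral {0..} B"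
proof -
  obtain c where c: "0 \<le> c" "\<And>t. T \<le> t \<Longrightarrow> \<bar>nderiv 0 p t\<bar> \<le> c * w t / t ^ 0"
    using symbol_boundE[OF _ weight_w] p unfolding admissible_def by blast
  have "\<bar>vhat p \<xi>\<bar> \<le> integral {0..} B"
    if \<xi>: "0 < \<xi>" and B: "B integrable_on {0..}" "\<And>t. 0 \<le> t \<Longrightarrow> 0 \<le> B t"
      "\<And>t. T \<le> t \<Longrightarrow> c * w t * min t (1 / \<xi>) \<le> B t" for \<xi> B
  proof -
    have "vhat p \<xi> = integral {0..} (\<lambda>t. p t * sin (t * \<xi>) / \<xi>)"
      unfolding vhat_def sin_transform_def by simp
    also have "\<bar>\<dots>\<bar> \<le> integral {0..} B"
    proof (rule abs_integral_le_integral)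
      show "(\<lambda>t. p t * sin (t * \<xi>) / \<xi>) integrable_on {0..}"
        using integrable_admissible_mult_sin[OF p] \<xi> by simp
      fix t :: real
      assume t: "t \<in> {0..}"
      show "\<bar>p t * sin (t * \<xi>) / \<xi>\<bar> \<le> B t"
      proof (cases "T \<le> t")
        case True
        have "\<bar>sin (t * \<xi>)\<bar> / \<xi> \<le> min t (1 / \<xi>)"
          using abs_sin_x_le_abs_x[of "t * \<xi>"] abs_sin_le_one[of "t * \<xi>"] \<xi> t
          by (auto simp: divide_le_eq abs_mult)
        then have "\<bar>p t\<bar> * (\<bar>sin (t * \<xi>)\<bar> / \<xi>) \<le> (c * w t) * min t (1 / \<xi>)"
          using c(2)[OF True] \<xi> by (intro mult_mono) auto
        then show ?thesis
          using B(3)[OF True] \<xi> by (simp add: abs_mult abs_divide)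
      next
        case False
        then show ?thesis
          using p B(2) t by (simp add: admissible_def)
      qed
    qed (use B in auto)
    finally show ?thesis .
  qed
  then show ?thesis
    using that c(1) by blast
qed

end

section \<open>Functions of the class \<open>\<Lambda>\<close>\<close>

locale lambda_growth =
  fixes T :: real and lam :: "real \<Rightarrow> real" and Cl Cu :: real and D :: "nat \<Rightarrow> real"
  assumes T_gt_100: "100 < T"
    and lam_pos: "\<And>t. 50 < t \<Longrightarrow> 0 < lam t"
    and smooth_lam: "smooth_on {50<..} lam"
    and Cl_nonneg: "0 \<le> Cl" and Cu_nonneg: "0 \<le> Cu" and Cu_less: "Cu < 1/2"
    and log_deriv_lower: "\<And>t. T \<le> t \<Longrightarrow> - Cl / t \<le> nderiv 1 lam t / lam t"
    and log_deriv_upper: "\<And>t. T \<le> t \<Longrightarrow> nderiv 1 lam t / lam t \<le> Cu / t"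
    and D_nonneg: "\<And>k. 0 \<le> D k"
    and nderiv_lam_bound: "\<And>k t. T \<le> t \<Longrightarrow> \<bar>nderiv k lam t\<bar> \<le> D k * lam t / t ^ k"

sublocale lambda_growth \<subseteq> symbol_calculus "{50<..}" T
  by unfold_locales (use T_gt_100 in auto)

context lambda_growth
begin

lemma exp_1_le_T: "exp 1 \<le> T"
  using exp_le T_gt_100 by linarith

lemma lam_pos_ge_T: "T \<le> t \<Longrightarrow> 0 < lam t"
  using lam_pos T_gt_100 by simp

lemma lam_has_log_derivative:
  assumes "50 < x"
  shows "((\<lambda>x. ln (lam x)) has_real_derivative nderiv 1 lam x / lam x) (at x)"
  using smooth_on_has_real_derivative[OF smooth_lam, of x] assms lam_pos[OF assms]
  by (auto intro!: derivative_eq_intros simp: nderiv_Suc field_simps)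

lemma lam_le_growth:
  assumes "T \<le> s" "s \<le> t"
  shows "lam t \<le> lam s * (t / s) powr Cu"
proof -
  have "(\<lambda>x. ln (lam x) - Cu * ln x) t \<le> (\<lambda>x. ln (lam x) - Cu * ln x) s"
  proof (rule DERIV_nonpos_imp_nonincreasing[OF assms(2)])
    fix x
    assume "s \<le> x" "x \<le> t"
    then have x: "50 < x" "T \<le> x"
      using assms T_gt_100 by auto
    have "((\<lambda>x. ln (lam x) - Cu * ln x) has_real_derivative nderiv 1 lam x / lam x - Cu * (1 / x)) (at x)"
      by (rule DERIV_diff[OF lam_has_log_derivative[OF x(1)] DERIV_cmult[OF DERIV_ln_divide]]) (use x in auto)
    then show "\<exists>y. ((\<lambda>x. ln (lam x) - Cu * ln x) has_real_derivative y) (at x) \<and> y \<le> 0"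
      using log_deriv_upper[OF x(2)] by (intro exI conjI) auto
  qed
  then have "ln (lam t) \<le> ln (lam s) + Cu * (ln t - ln s)"
    by (simp add: algebra_simps)
  also have "\<dots> = ln (lam s * (t / s) powr Cu)"
    using assms T_gt_100 lam_pos[of s] by (simp add: ln_mult ln_div ln_powr)
  finally show ?thesis
    using assms T_gt_100 lam_pos[of s] lam_pos[of t] by (simp add: ln_le_cancel_iff)
qed

lemma lam_ge_growth:
  assumes "T \<le> s" "s \<le> t"
  shows "lam s * (t / s) powr (- Cl) \<le> lam t"
proof -
  have "(\<lambda>x. ln (lam x) + Cl * ln x) s \<le> (\<lambda>x. ln (lam x) + Cl * ln x) t"
  proof (rule DERIV_nonneg_imp_nondecreasing[OF assms(2)])
    fix x
    assume "s \<le> x" "x \<le> t"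
    then have x: "50 < x" "T \<le> x"
      using assms T_gt_100 by auto
    have "((\<lambda>x. ln (lam x) + Cl * ln x) has_real_derivative nderiv 1 lam x / lam x + Cl * (1 / x)) (at x)"
      by (rule DERIV_add[OF lam_has_log_derivative[OF x(1)] DERIV_cmult[OF DERIV_ln_divide]]) (use x in auto)
    then show "\<exists>y. ((\<lambda>x. ln (lam x) + Cl * ln x) has_real_derivative y) (at x) \<and> 0 \<le> y"
      using log_deriv_lower[OF x(2)] by (intro exI conjI) auto
  qed
  then have "ln (lam s * (t / s) powr (- Cl)) \<le> ln (lam t)"
    using assms T_gt_100 lam_pos[of s] by (simp add: ln_mult ln_div ln_powr algebra_simps)
  then show ?thesis
    using assms T_gt_100 lam_pos[of s] lam_pos[of t] by (simp add: ln_le_cancel_iff)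
qed

lemma lam_le_twice:
  assumes "T \<le> t" "t \<le> s" "s \<le> 2 * t"
  shows "lam s \<le> 2 * lam t"
proof -
  have "(s / t) powr Cu \<le> 2 powr Cu"
    using assms T_gt_100 Cu_nonneg by (intro powr_mono2) (auto simp: field_simps)
  also have "\<dots> \<le> 2 powr 1"
    using Cu_less by (intro powr_mono) auto
  finally have "lam t * (s / t) powr Cu \<le> lam t * 2"
    using lam_pos_ge_T[OF assms(1)] by simp
  then show ?thesis
    using lam_le_growth[OF assms(1,2)] by simp
qed

text \<open>Integrating the bounds on \<open>\<lambda>'/\<lambda>\<close> from \<open>T\<close> gives \<open>\<bar>ln \<lambda>(t) - ln \<lambda>(T)\<bar> \<le> max Cl Cu (ln t - ln T)\<close>.\<close>

lemma abs_ln_lam_le: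
  obtains c where "0 \<le> c" "\<And>t. T \<le> t \<Longrightarrow> \<bar>ln (lam t)\<bar> \<le> c * ln t"
proof -
  define M where "M = max Cl Cu"
  have "\<bar>ln (lam t)\<bar> \<le> (\<bar>ln (lam T)\<bar> + M) * ln t" if t: "T \<le> t" for t
  proof -
    have pos: "0 < lam T" "0 < lam t" "0 < T"
      using lam_pos_ge_T t T_gt_100 by auto
    have d: "0 \<le> ln t - ln T" "ln t - ln T \<le> ln t"
      using t T_gt_100 by auto
    have "ln (lam t) \<le> ln (lam T * (t / T) powr Cu)"
      using lam_le_growth[OF order_refl t] pos by simp
    then have up: "ln (lam t) \<le> ln (lam T) + Cu * (ln t - ln T)"
      using pos t by (simp add: ln_mult ln_div ln_powr)
    have "ln (lam T * (t / T) powr (- Cl)) \<le> ln (lam t)"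
      using lam_ge_growth[OF order_refl t] pos t by simp
    then have lo: "ln (lam T) - Cl * (ln t - ln T) \<le> ln (lam t)"
      using pos t by (simp add: ln_mult ln_div ln_powr)
    have "Cu * (ln t - ln T) \<le> M * ln t" "Cl * (ln t - ln T) \<le> M * ln t"
      using d Cu_nonneg Cl_nonneg by (auto simp: M_def intro!: mult_mono)
    then have "\<bar>ln (lam t)\<bar> \<le> \<bar>ln (lam T)\<bar> * 1 + M * ln t"
      using up lo by linarith
    also have "\<dots> \<le> \<bar>ln (lam T)\<bar> * ln t + M * ln t"
      using ln_ge_1[OF exp_1_le_T t] by (intro add_right_mono mult_left_mono) auto
    finally show ?thesis
      by (simp add: distrib_right)
  qed
  moreover have "0 \<le> \<bar>ln (lam T)\<bar> + M"
    using Cu_nonneg by (simp add: M_def)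
  ultimately show ?thesis
    using that by blast
qed

lemma weight_lam: "weight (\<lambda>t. lam t / t ^ m)"
  unfolding weight_def using lam_pos_ge_T ge_T_pos_in_domain by (auto intro!: divide_nonneg_pos less_imp_le)

lemma symbol_nderiv_lam: "symbol (\<lambda>t. lam t / t ^ m) (nderiv m lam)"
  unfolding symbol_def
proof (intro conjI allI)
  show "smooth_on {50<..} (nderiv m lam)"
    by (rule smooth_on_nderiv[OF smooth_lam])
  fix j
  have "\<bar>nderiv j (nderiv m lam) t\<bar> \<le> D (j + m) * (lam t / t ^ m) / t ^ j" if "T \<le> t" for t
    using nderiv_lam_bound[OF that, of "j + m"] by (simp add: nderiv_nderiv power_add field_simps)
  then show "\<exists>c. \<forall>t\<ge>T. \<bar>nderiv j (nderiv m lam) t\<bar> \<le> c * (lam t / t ^ m) / t ^ j"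
    by blast
qed

definition log_deriv_lam :: "real \<Rightarrow> real" where
  "log_deriv_lam t = nderiv 1 lam t / lam t"

lemma smooth_on_log_deriv_lam: "smooth_on {50<..} log_deriv_lam"
proof -
  have "smooth_on {50<..} (\<lambda>t. 1 / lam t)"
    by (rule smooth_on_compose[OF _ smooth_lam _ smooth_on_inverse]) (use lam_pos in auto)
  then have "smooth_on {50<..} (\<lambda>t. nderiv 1 lam t * (1 / lam t))"
    by (intro smooth_on_mult smooth_on_nderiv[OF smooth_lam]) auto
  then show ?thesis
    unfolding log_deriv_lam_def by simp
qed

text \<open>By strong induction on \<open>j\<close>, from Leibniz's rule for \<open>\<lambda>' = q \<lambda>\<close>:
  \<open>q\<^sup>(\<^sup>j\<^sup>) \<lambda> = \<lambda>\<^sup>(\<^sup>j\<^sup>+\<^sup>1\<^sup>) - \<Sum>\<^sub>i\<^sub><\<^sub>j (j choose i) q\<^sup>(\<^sup>i\<^sup>) \<lambda>\<^sup>(\<^sup>j\<^sup>-\<^sup>i\<^sup>)\<close>.\<close>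

lemma nderiv_log_deriv_lam_bound: "\<exists>c. \<forall>t\<ge>T. \<bar>nderiv j log_deriv_lam t\<bar> \<le> c / t ^ Suc j"
proof (induction j rule: less_induct)
  case (less j)
  then obtain cq where cq: "\<And>i t. i < j \<Longrightarrow> T \<le> t \<Longrightarrow> \<bar>nderiv i log_deriv_lam t\<bar> \<le> cq i / t ^ Suc i"
    by metis
  define K where "K = D (Suc j) + (\<Sum>i<j. real (j choose i) * cq i * D (j - i))"
  have "\<bar>nderiv j log_deriv_lam t\<bar> \<le> K / t ^ Suc j" if t: "T \<le> t" for t
  proof -
    have t0: "0 < t" "t \<in> {50<..}" and lt: "0 < lam t"
      using ge_T_pos_in_domain[OF t] lam_pos_ge_T[OF t] by auto
    let ?S = "\<Sum>i<j. real (j choose i) * nderiv i log_deriv_lam t * nderiv (j - i) lam t"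
    have "log_deriv_lam x * lam x = nderiv 1 lam x" if "x \<in> {50<..}" for x
      using lam_pos[of x] that by (simp add: log_deriv_lam_def)
    then have "nderiv j (\<lambda>t. log_deriv_lam t * lam t) t = nderiv j (nderiv 1 lam) t"
      by (intro nderiv_cong_open[OF _ _ t0(2)]) auto
    moreover have "nderiv j (\<lambda>t. log_deriv_lam t * lam t) t = ?S + nderiv j log_deriv_lam t * lam t"
      using nderiv_mult[OF _ smooth_on_log_deriv_lam smooth_lam t0(2), of j]
      by (simp add: atLeast0AtMost lessThan_Suc_atMost[symmetric])
    ultimately have e: "nderiv j log_deriv_lam t * lam t = nderiv (Suc j) lam t - ?S"
      by (simp add: nderiv_nderiv)
    have "\<bar>?S\<bar> \<le> (\<Sum>i<j. \<bar>real (j choose i) * nderiv i log_deriv_lam t * nderiv (j - i) lam t\<bar>)"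
      by (rule sum_abs)
    also have "\<dots> \<le> (\<Sum>i<j. real (j choose i) * cq i * D (j - i) * lam t / t ^ Suc j)"
    proof (rule sum_mono)
      fix i
      assume i: "i \<in> {..<j}"
      have cq0: "0 \<le> cq i / t ^ Suc i"
        using cq[of i t] i t by (meson abs_ge_zero lessThan_iff order_trans)
      have "\<bar>real (j choose i) * nderiv i log_deriv_lam t * nderiv (j - i) lam t\<bar> =
          real (j choose i) * (\<bar>nderiv i log_deriv_lam t\<bar> * \<bar>nderiv (j - i) lam t\<bar>)"
        by (simp add: abs_mult)
      also have "\<dots> \<le> real (j choose i) * ((cq i / t ^ Suc i) * (D (j - i) * lam t / t ^ (j - i)))"
        using cq[of i t] i t nderiv_lam_bound[OF t] cq0 by (intro mult_left_mono mult_mono) auto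
      also have "\<dots> = real (j choose i) * cq i * D (j - i) * lam t / (t ^ Suc i * t ^ (j - i))"
        by (simp add: field_simps)
      also have "t ^ Suc i * t ^ (j - i) = t ^ Suc j"
        using i by (simp add: power_add[symmetric])
      finally show "\<bar>real (j choose i) * nderiv i log_deriv_lam t * nderiv (j - i) lam t\<bar> \<le>
          real (j choose i) * cq i * D (j - i) * lam t / t ^ Suc j" .
    qed
    finally have S_bound: "\<bar>?S\<bar> \<le> (\<Sum>i<j. real (j choose i) * cq i * D (j - i)) * lam t / t ^ Suc j"
      by (simp add: sum_distrib_right sum_divide_distrib)
    have "\<bar>nderiv j log_deriv_lam t\<bar> * lam t = \<bar>nderiv (Suc j) lam t - ?S\<bar>"
      unfolding e[symmetric] using lt by (simp add: abs_mult)
    also have "\<dots> \<le> \<bar>nderiv (Suc j) lam t\<bar> + \<bar>?S\<bar>"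
      by (rule abs_triangle_ineq4)
    also have "\<dots> \<le> D (Suc j) * lam t / t ^ Suc j +
        (\<Sum>i<j. real (j choose i) * cq i * D (j - i)) * lam t / t ^ Suc j"
      using nderiv_lam_bound[OF t] S_bound by (rule add_mono)
    also have "\<dots> = (K / t ^ Suc j) * lam t"
      unfolding K_def by (simp add: add_divide_distrib distrib_right)
    finally show ?thesis
      using lt by (simp only: mult_le_cancel_right_pos)
  qed
  then show ?case
    by blast
qed

lemma symbol_log_deriv_lam: "symbol (\<lambda>t. 1 / t) log_deriv_lam"
  unfolding symbol_def
proof (intro conjI allI)
  show "smooth_on {50<..} log_deriv_lam"
    by (rule smooth_on_log_deriv_lam)
  fix j
  obtain c where "\<forall>t\<ge>T. \<bar>nderiv j log_deriv_lam t\<bar> \<le> c / t ^ Suc j"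
    using nderiv_log_deriv_lam_bound by blast
  then show "\<exists>c. \<forall>t\<ge>T. \<bar>nderiv j log_deriv_lam t\<bar> \<le> c * (1 / t) / t ^ j"
    by (intro exI[of _ c]) (simp add: field_simps)
qed

lemma symbol_ln_lam: "symbol (\<lambda>t. ln t) (\<lambda>t. ln (lam t))"
proof -
  obtain c where c: "\<And>t. T \<le> t \<Longrightarrow> \<bar>ln (lam t)\<bar> \<le> c * ln t"
    using abs_ln_lam_le by blast
  show ?thesis
  proof (rule symbol_antiderivative[where g = log_deriv_lam and c = c])
    show "((\<lambda>t. ln (lam t)) has_real_derivative log_deriv_lam x) (at x)" if "x \<in> {50<..}" for x
      using lam_has_log_derivative that by (simp add: log_deriv_lam_def)
    show "symbol (\<lambda>t. ln t / t) log_deriv_lam"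
    proof (rule symbol_mono[OF symbol_log_deriv_lam weight_inverse, where K = 1])
      fix t
      assume t: "T \<le> t"
      then show "1 / t \<le> 1 * (ln t / t)"
        using ln_ge_1[OF exp_1_le_T t] ge_T_pos_in_domain[OF t] by (simp add: divide_right_mono)
    qed
  qed (rule c)
qed

end

section \<open>The Hilbert-type integrals\<close>

text \<open>After the substitution \<open>s = t u\<close>, \<open>hilbert_near 0 g t\<close> and \<open>hilbert_far 0 g t\<close> are
  \<open>\<integral>\<^sub>t\<^sup>2\<^sup>t (g s - g t) / (s - t) ds\<close> and \<open>\<integral>\<^sub>2\<^sub>t\<^sup>\<infinity> g s / (s - t) ds\<close>; the factor \<open>u\<^sup>j\<close> is
  produced by differentiating \<open>g (t u)\<close> \<open>j\<close> times in \<open>t\<close>.\<close>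

definition hilbert_near :: "nat \<Rightarrow> (real \<Rightarrow> real) \<Rightarrow> real \<Rightarrow> real" where
  "hilbert_near j g t = integral {1..2} (\<lambda>u. (u ^ j * g (t * u) - g t) / (u - 1))"

definition hilbert_far :: "nat \<Rightarrow> (real \<Rightarrow> real) \<Rightarrow> real \<Rightarrow> real" where
  "hilbert_far j g t = integral {2..} (\<lambda>u. u ^ j * g (t * u) / (u - 1))"

lemma less_mult_of_one_le:
  fixes a x u :: real
  assumes "0 \<le> a" "a < x" "1 \<le> u"
  shows "a < x * u"
proof -
  have "x * 1 \<le> x * u"
    using assms by (intro mult_left_mono) auto
  then show ?thesis
    using assms by linarith
qed

lemma abs_hilbert_near_integrand_le:
  assumes g: "smooth_on {a<..} g" and a: "0 \<le> a" "a < x"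
    and A: "\<And>s. s \<in> {x..2 * x} \<Longrightarrow> \<bar>g s\<bar> \<le> A0 \<and> \<bar>deriv g s\<bar> \<le> A1" and u: "u \<in> {1..2}"
  shows "\<bar>(u ^ j * g (x * u) - g x) / (u - 1)\<bar> \<le> real j * 2 ^ j * A0 + 2 ^ j * x * A1"
proof -
  define \<phi>' where "\<phi>' u = real j * u ^ (j - 1) * g (x * u) + u ^ j * (deriv g (x * u) * x)" for u
  have xu: "x * u \<in> {x..2 * x}" "x * u \<in> {a<..}" if "u \<in> {1..2}" for u
  proof -
    have "x * 1 \<le> x * u" "x * u \<le> x * 2"
      using that a by (intro mult_left_mono; simp)+
    then show "x * u \<in> {x..2 * x}" "x * u \<in> {a<..}"
      using a less_mult_of_one_le[OF a, of u] that by (simp_all add: mult.commute)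
  qed
  have d: "((\<lambda>u. u ^ j * g (x * u)) has_real_derivative \<phi>' u) (at u)" if "u \<in> {1..2}" for u
  proof -
    have "((\<lambda>u. g (x * u)) has_real_derivative deriv g (x * u) * (x * 1)) (at u)"
      by (rule DERIV_chain2[OF smooth_on_has_real_derivative[OF g xu(2)[OF that]] DERIV_cmult[OF DERIV_ident]])
    from DERIV_mult'[OF DERIV_pow this, of j] show ?thesis
      by (rule DERIV_cong) (simp add: \<phi>'_def algebra_simps)
  qed
  have A_nonneg: "0 \<le> A0" "0 \<le> A1"
    using A[of x] a by auto
  have "\<bar>\<phi>' u\<bar> \<le> real j * 2 ^ j * A0 + 2 ^ j * x * A1" if u: "u \<in> {1..2}" for u
  proof -
    have "u ^ (j - 1) \<le> 2 ^ (j - 1)"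
      using u by (intro power_mono) auto
    also have "(2::real) ^ (j - 1) \<le> 2 ^ j"
      by (rule power_increasing) auto
    finally have p1: "u ^ (j - 1) \<le> 2 ^ j" .
    have p2: "u ^ j \<le> 2 ^ j"
      using u by (intro power_mono) auto
    have "\<bar>\<phi>' u\<bar> \<le> real j * u ^ (j - 1) * \<bar>g (x * u)\<bar> + u ^ j * (\<bar>deriv g (x * u)\<bar> * x)"
      unfolding \<phi>'_def using u a by (auto simp: abs_mult intro!: order_trans[OF abs_triangle_ineq])
    also have "\<dots> \<le> real j * 2 ^ j * A0 + 2 ^ j * (A1 * x)"
      using A[OF xu(1)[OF u]] p1 p2 u a A_nonneg by (intro add_mono mult_mono mult_left_mono) auto
    finally show ?thesis
      by (simp add: algebra_simps)
  qed
  then show ?thesis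
    using abs_difference_quotient_le[of "{1..2}" "\<lambda>u. u ^ j * g (x * u)" \<phi>' _ 1 u] d u by simp
qed

lemma integrable_hilbert_near_integrand:
  assumes g: "smooth_on {a<..} g" and a: "0 \<le> a" "a < x"
  shows "(\<lambda>u. (u ^ j * g (x * u) - g x) / (u - 1)) integrable_on {1..2}"
proof -
  have sub: "{x..2 * x} \<subseteq> {a<..}"
    using a by auto
  obtain A0 where "\<And>s. s \<in> {x..2 * x} \<Longrightarrow> \<bar>g s\<bar> \<le> A0"
    using continuous_on_compact_bound[OF compact_Icc smooth_on_continuous_on[OF g sub, of 0]] by auto
  moreover obtain A1 where "\<And>s. s \<in> {x..2 * x} \<Longrightarrow> \<bar>deriv g s\<bar> \<le> A1"
    using continuous_on_compact_bound[OF compact_Icc smooth_on_continuous_on[OF g sub, of 1]]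
    by (auto simp: nderiv_Suc)
  ultimately have bound: "\<bar>(u ^ j * g (x * u) - g x) / (u - 1)\<bar> \<le> real j * 2 ^ j * A0 + 2 ^ j * x * A1"
    if "u \<in> {1..2}" for u
    by (intro abs_hilbert_near_integrand_le[OF g a _ that]) auto
  show ?thesis
  proof (rule measurable_bounded_by_integrable_imp_integrable_real)
    have "continuous_on {1..2} (\<lambda>u. g (x * u))"
      using less_mult_of_one_le[OF a]
      by (intro continuous_on_compose2[OF smooth_on_continuous_on[OF g order_refl, of 0, simplified]])
         (auto intro!: continuous_intros)
    then show "(\<lambda>u. (u ^ j * g (x * u) - g x) / (u - 1)) \<in> borel_measurable (lebesgue_on {1..2})"
      by (intro borel_measurable_divide continuous_imp_measurable_on_sets_lebesgue continuous_intros) auto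
  qed (use bound in auto)
qed

lemma hilbert_near_has_real_derivative:
  assumes g: "smooth_on {a<..} g" and a: "0 \<le> a" "a < t"
  shows "(hilbert_near j g has_real_derivative hilbert_near (Suc j) (deriv g) t) (at t)"
proof -
  define \<delta> where "\<delta> = (t - a) / 2"
  have \<delta>: "0 < \<delta>" "a < t - \<delta>"
    using a by (simp_all add: \<delta>_def field_simps)
  have g': "smooth_on {a<..} (deriv g)"
    by (rule smooth_on_deriv[OF g])
  have sub: "{t - \<delta>..2 * (t + \<delta>)} \<subseteq> {a<..}"
    using \<delta> by auto
  obtain A0 where A0: "\<And>s. s \<in> {t - \<delta>..2 * (t + \<delta>)} \<Longrightarrow> \<bar>deriv g s\<bar> \<le> A0"
    using continuous_on_compact_bound[OF compact_Icc smooth_on_continuous_on[OF g' sub, of 0]] by auto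
  obtain A1 where A1: "\<And>s. s \<in> {t - \<delta>..2 * (t + \<delta>)} \<Longrightarrow> \<bar>deriv (deriv g) s\<bar> \<le> A1"
    using continuous_on_compact_bound[OF compact_Icc smooth_on_continuous_on[OF g' sub, of 1]]
    by (auto simp: nderiv_Suc)
  have ball: "a < x" "x \<le> t + \<delta>" "{x..2 * x} \<subseteq> {t - \<delta>..2 * (t + \<delta>)}" if "x \<in> ball t \<delta>" for x
    using that \<delta> by (auto simp: dist_real_def)
  have "0 \<le> A1"
    using A1[of t] \<delta> a by auto
  show ?thesis
    unfolding hilbert_near_def
  proof (rule has_real_derivative_integral_dominated
      [where U = "ball t \<delta>" and h = "\<lambda>_. real (Suc j) * 2 ^ Suc j * A0 + 2 ^ Suc j * (t + \<delta>) * A1"])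
    fix x u
    assume x: "x \<in> ball t \<delta>" and u: "u \<in> {1..2::real}"
    have xu: "x * u \<in> {a<..}"
      using less_mult_of_one_le[OF a(1) ball(1)[OF x]] u by simp
    show "((\<lambda>x. (u ^ j * g (x * u) - g x) / (u - 1)) has_real_derivative
        (u ^ Suc j * deriv g (x * u) - deriv g x) / (u - 1)) (at x)"
    proof (cases "u = 1")
      case False
      have "((\<lambda>x. x * u) has_real_derivative u) (at x)"
        by (auto intro!: derivative_eq_intros)
      from DERIV_chain2[OF smooth_on_has_real_derivative[OF g xu] this]
      have "((\<lambda>x. g (x * u)) has_real_derivative deriv g (x * u) * u) (at x)" .
      then have "((\<lambda>x. (u ^ j * g (x * u) - g x) / (u - 1)) has_real_derivative
          (u ^ j * (deriv g (x * u) * u) - deriv g x) / (u - 1)) (at x)"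
        by (intro DERIV_cdivide DERIV_diff DERIV_cmult smooth_on_has_real_derivative[OF g])
           (use ball(1)[OF x] in auto)
      then show ?thesis
        by (rule DERIV_cong) (simp add: algebra_simps)
    qed simp
    have "\<bar>(u ^ Suc j * deriv g (x * u) - deriv g x) / (u - 1)\<bar> \<le>
        real (Suc j) * 2 ^ Suc j * A0 + 2 ^ Suc j * x * A1"
      by (rule abs_hilbert_near_integrand_le[OF g' a(1) ball(1)[OF x] _ u])
         (use A0 A1 ball(3)[OF x] in auto)
    also have "\<dots> \<le> real (Suc j) * 2 ^ Suc j * A0 + 2 ^ Suc j * (t + \<delta>) * A1"
      using ball(2)[OF x] \<open>0 \<le> A1\<close> by (intro add_left_mono mult_right_mono mult_left_mono) auto
    finally show "\<bar>(u ^ Suc j * deriv g (x * u) - deriv g x) / (u - 1)\<bar> \<le>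
        real (Suc j) * 2 ^ Suc j * A0 + 2 ^ Suc j * (t + \<delta>) * A1" .
  next
    fix x
    assume "x \<in> ball t \<delta>"
    then show "(\<lambda>u. (u ^ j * g (x * u) - g x) / (u - 1)) integrable_on {1..2}"
      using integrable_hilbert_near_integrand[OF g a(1) ball(1)] by blast
  qed (use \<delta> in auto)
qed

lemma nderiv_hilbert_near:
  assumes g: "smooth_on {a<..} g" and a: "0 \<le> a" "a < x"
  shows "nderiv j (hilbert_near 0 g) x = hilbert_near j (nderiv j g) x"
  using a(2)
proof (induction j arbitrary: x)
  case 0
  then show ?case by simp
next
  case (Suc j)
  have "nderiv (Suc j) (hilbert_near 0 g) x = deriv (hilbert_near j (nderiv j g)) x"
    unfolding nderiv_Suc_deriv
    by (rule deriv_cong_ev) (use Suc eventually_nhds_in_open[of "{a<..}" x] in \<open>auto elim!: eventually_mono\<close>)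
  also have "\<dots> = hilbert_near (Suc j) (nderiv (Suc j) g) x"
    unfolding nderiv_Suc_deriv
    by (rule DERIV_imp_deriv[OF hilbert_near_has_real_derivative[OF smooth_on_nderiv[OF g] a(1) Suc.prems]])
  finally show ?case .
qed

lemma smooth_on_hilbert_near:
  assumes g: "smooth_on {a<..} g" and a: "0 \<le> a"
  shows "smooth_on {a<..} (hilbert_near 0 g)"
  unfolding smooth_on_def
proof (intro allI ballI)
  fix j x
  assume x: "x \<in> {a<..}"
  have "hilbert_near j (nderiv j g) differentiable (at x)"
    using hilbert_near_has_real_derivative[OF smooth_on_nderiv[OF g] a, of x j] x
    by (auto simp: real_differentiable_def)
  then show "nderiv j (hilbert_near 0 g) differentiable (at x)"
    by (rule differentiable_cong_open[of _ _ "{a<..}"]) (use nderiv_hilbert_near[OF g a] x in auto)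
qed

lemma hilbert_near_eq_integral:
  assumes t: "0 < t"
  shows "hilbert_near 0 g t = integral {t..2 * t} (\<lambda>s. (g s - g t) / (s - t))"
proof -
  define F where "F = (\<lambda>s. (g s - g t) / (s - t))"
  have img: "(\<lambda>x. x / t) ` {t..2 * t} = {1..2}"
  proof
    show "(\<lambda>x. x / t) ` {t..2 * t} \<subseteq> {1..2}"
      using t by (auto simp: field_simps)
    show "{1..2} \<subseteq> (\<lambda>x. x / t) ` {t..2 * t}"
    proof
      fix y :: real
      assume y: "y \<in> {1..2}"
      then have "t * y \<in> {t..2 * t}" "y = t * y / t"
        using t by (auto simp: mult_le_cancel_left1)
      then show "y \<in> (\<lambda>x. x / t) ` {t..2 * t}"
        by blast
    qed
  qed
  have "integral {1..2} (\<lambda>x. F (t * x)) = (1 / t) * integral {t..2 * t} F"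
    using integral_stretch_real[where m = t and f = F and a = t and b = "2 * t"] t img by simp
  moreover have "(\<lambda>u. (u ^ 0 * g (t * u) - g t) / (u - 1)) = (\<lambda>u. t * F (t * u))"
  proof
    fix u
    show "(u ^ 0 * g (t * u) - g t) / (u - 1) = t * F (t * u)"
    proof (cases "u = 1")
      case False
      then have "t * u - t = t * (u - 1)" "u - 1 \<noteq> 0"
        by (auto simp: algebra_simps)
      then show ?thesis
        using t unfolding F_def by (simp add: field_simps)
    qed (simp add: F_def)
  qed
  ultimately have "hilbert_near 0 g t = integral {t..2 * t} F"
    unfolding hilbert_near_def using t by simp
  then show ?thesis
    unfolding F_def .
qed

lemma hilbert_far_eq_integral:
  assumes t: "0 < t" and g: "(\<lambda>u. g (t * u) / (u - 1)) absolutely_integrable_on {2..}"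
  shows "hilbert_far 0 g t = integral {2 * t..} (\<lambda>s. g s / (s - t))"
proof -
  define F where "F = (\<lambda>s. g s / (s - t))"
  have eq: "(\<lambda>x. \<bar>t\<bar> * F (t * x)) = (\<lambda>u. u ^ 0 * g (t * u) / (u - 1))"
  proof
    fix u
    show "\<bar>t\<bar> * F (t * u) = u ^ 0 * g (t * u) / (u - 1)"
    proof (cases "u = 1")
      case False
      then have "t * u - t = t * (u - 1)" "u - 1 \<noteq> 0"
        by (auto simp: algebra_simps)
      then show ?thesis
        using t unfolding F_def by (simp add: field_simps)
    qed (simp add: F_def)
  qed
  have img: "(\<lambda>u. t * u) ` {2..} = {2 * t..}"
  proof
    show "(\<lambda>u. t * u) ` {2..} \<subseteq> {2 * t..}"
      using t by (auto simp: mult.commute)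
    show "{2 * t..} \<subseteq> (\<lambda>u. t * u) ` {2..}"
    proof
      fix y
      assume "y \<in> {2 * t..}"
      then have "y / t \<in> {2..}" "y = t * (y / t)"
        using t by (auto simp: field_simps)
      then show "y \<in> (\<lambda>u. t * u) ` {2..}"
        by blast
    qed
  qed
  have "F absolutely_integrable_on (\<lambda>u. t * u) ` {2..} \<and>
      integral ((\<lambda>u. t * u) ` {2..}) F = integral {2..} (\<lambda>x. \<bar>t\<bar> * F (t * x))"
  proof (rule has_absolute_integral_change_of_variables_1'[THEN iffD1])
    show "\<And>x. x \<in> {2..} \<Longrightarrow> ((*) t has_real_derivative t) (at x within {2..})"
      by (auto intro!: derivative_eq_intros)
    show "inj_on ((*) t) {2..}"
      using t by (auto simp: inj_on_def)
  qed (use g eq in auto)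
  then have "integral {2 * t..} F = hilbert_far 0 g t"
    unfolding hilbert_far_def img eq by simp
  then show ?thesis
    unfolding F_def by simp
qed

lemma abs_divide_pred_le:
  fixes y u :: real
  assumes "2 \<le> u"
  shows "\<bar>y / (u - 1)\<bar> \<le> \<bar>y\<bar>"
proof -
  have "\<bar>y / (u - 1)\<bar> = \<bar>y\<bar> / (u - 1)"
    using assms by (simp add: abs_divide)
  also have "\<dots> \<le> \<bar>y\<bar> / 1"
    using assms by (intro divide_left_mono) auto
  finally show ?thesis
    by simp
qed

lemma abs_power_mult_le_powr:
  fixes u b y M e :: real
  assumes u: "0 < u" "u \<le> b" and y: "\<bar>y\<bar> \<le> M" and e: "e \<le> 0"
  shows "\<bar>u ^ j * y\<bar> \<le> M * b ^ j * b powr (- e) * u powr e"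
proof -
  have "b powr (- e) * b powr e \<le> b powr (- e) * u powr e"
    using u e by (intro mult_left_mono powr_mono2') auto
  then have one: "1 \<le> b powr (- e) * u powr e"
    using u by (simp add: powr_add[symmetric])
  have "\<bar>u ^ j * y\<bar> \<le> b ^ j * M"
    using u y by (simp add: abs_mult) (intro mult_mono power_mono, auto)
  also have "\<dots> \<le> b ^ j * M * (b powr (- e) * u powr e)"
    using mult_left_mono[OF one, of "b ^ j * M"] u y by simp
  finally show ?thesis
    by (simp add: mult_ac)
qed

context lambda_growth
begin

lemma abs_hilbert_near_nderiv_lam_le:
  assumes t: "T \<le> t"
  shows "\<bar>hilbert_near j (nderiv m lam) t\<bar> \<le>
    (real j * 2 ^ j * (2 * D m) + 2 ^ j * (2 * D (Suc m))) * lam t / t ^ m"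
proof -
  have t0: "50 < t" "0 < t" and lt: "0 < lam t"
    using ge_T_pos_in_domain[OF t] lam_pos_ge_T[OF t] by auto
  have near: "\<bar>nderiv k lam s\<bar> \<le> 2 * D k * lam t / t ^ k" if s: "s \<in> {t..2 * t}" for s k
  proof -
    have "\<bar>nderiv k lam s\<bar> \<le> D k * lam s / s ^ k"
      using nderiv_lam_bound[of s k] s t by auto
    also have "\<dots> \<le> D k * (2 * lam t) / t ^ k"
      using lam_le_twice[OF t] s D_nonneg[of k] lt t0
      by (intro frac_le mult_left_mono power_mono) auto
    finally show ?thesis
      by (simp add: mult.assoc mult.left_commute)
  qed
  define B where "B = real j * 2 ^ j * (2 * D m * lam t / t ^ m) + 2 ^ j * t * (2 * D (Suc m) * lam t / t ^ Suc m)"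
  have "\<bar>hilbert_near j (nderiv m lam) t\<bar> \<le> integral {1..2::real} (\<lambda>_. B)"
    unfolding hilbert_near_def
  proof (rule abs_integral_le_integral)
    show "(\<lambda>u. (u ^ j * nderiv m lam (t * u) - nderiv m lam t) / (u - 1)) integrable_on {1..2}"
      by (rule integrable_hilbert_near_integrand[OF smooth_on_nderiv[OF smooth_lam] _ t0(1)]) simp
    show "\<bar>(u ^ j * nderiv m lam (t * u) - nderiv m lam t) / (u - 1)\<bar> \<le> B" if "u \<in> {1..2}" for u
      unfolding B_def
      by (rule abs_hilbert_near_integrand_le[OF smooth_on_nderiv[OF smooth_lam] _ t0(1) _ that])
         (use near[of _ m] near[of _ "Suc m"] in \<open>auto simp: nderiv_Suc_deriv[symmetric]\<close>)
  qed (rule integrable_const_ivl)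
  also have "\<dots> = (real j * 2 ^ j * (2 * D m) + 2 ^ j * (2 * D (Suc m))) * lam t / t ^ m"
    unfolding B_def using t0 by (simp add: field_simps)
  finally show ?thesis .
qed

lemma symbol_hilbert_near: "symbol (\<lambda>t. lam t / t ^ m) (hilbert_near 0 (nderiv m lam))"
  unfolding symbol_def
proof (intro conjI allI)
  show "smooth_on {50<..} (hilbert_near 0 (nderiv m lam))"
    by (rule smooth_on_hilbert_near[OF smooth_on_nderiv[OF smooth_lam]]) simp
  fix j
  define c where "c = real j * 2 ^ j * (2 * D (m + j)) + 2 ^ j * (2 * D (Suc (m + j)))"
  have "\<bar>nderiv j (hilbert_near 0 (nderiv m lam)) t\<bar> \<le> c * (lam t / t ^ m) / t ^ j" if t: "T \<le> t" for t
  proof -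
    have "nderiv j (hilbert_near 0 (nderiv m lam)) t = hilbert_near j (nderiv (m + j) lam) t"
      using nderiv_hilbert_near[OF smooth_on_nderiv[OF smooth_lam], where x = t and j = j] ge_T_pos_in_domain[OF t]
      by (simp add: nderiv_nderiv add.commute)
    also have "\<bar>\<dots>\<bar> \<le> c * lam t / t ^ (m + j)"
      unfolding c_def by (rule abs_hilbert_near_nderiv_lam_le[OF t])
    finally show ?thesis
      by (simp add: power_add field_simps)
  qed
  then show "\<exists>c. \<forall>t\<ge>T. \<bar>nderiv j (hilbert_near 0 (nderiv m lam)) t\<bar> \<le> c * (lam t / t ^ m) / t ^ j"
    by blast
qed

lemma integrable_powr_Cu_minus_2: "(\<lambda>u. A * u powr (Cu - 2)) integrable_on {2..}"
proof -
  have "(\<lambda>u. u powr (Cu - 2)) integrable_on {2..}"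
    using has_integral_powr_to_inf[of "Cu - 2" 2] Cu_less by (auto simp: integrable_on_def)
  from integrable_cmul[OF this, of A] show ?thesis
    by simp
qed

lemma abs_scaled_nderiv_lam_le:
  assumes a: "0 < a" "a \<le> x" and u: "1 \<le> u" and xu: "T \<le> x * u" and m: "j + 2 \<le> m"
  shows "\<bar>u ^ j * nderiv m lam (x * u)\<bar> \<le>
    D m * lam T * T powr (- Cu) * a powr (Cu - real m) * u powr (Cu - 2)"
proof -
  define A where "A = D m * lam T * T powr (- Cu) * a powr (Cu - real m)"
  have u0: "0 < u" and T0: "0 < T" "0 < lam T" and A: "0 \<le> A"
    using u T_gt_100 lam_pos_ge_T[of T] D_nonneg[of m] by (auto simp: A_def)
  have "\<bar>nderiv m lam (x * u)\<bar> \<le> D m * lam (x * u) / (x * u) ^ m"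
    by (rule nderiv_lam_bound[OF xu])
  also have "\<dots> \<le> D m * (lam T * (x * u / T) powr Cu) / (x * u) ^ m"
    using lam_le_growth[OF order_refl xu] D_nonneg[of m] xu T0
    by (intro divide_right_mono mult_left_mono) auto
  also have "\<dots> = D m * lam T * T powr (- Cu) * (x * u) powr (Cu - real m)"
    using xu T0 by (simp add: powr_divide powr_diff powr_realpow powr_minus field_simps)
  also have "\<dots> \<le> D m * lam T * T powr (- Cu) * (a * u) powr (Cu - real m)"
    using m Cu_less a u0 D_nonneg[of m] T0 by (intro mult_left_mono powr_mono2' mult_right_mono) auto
  also have "\<dots> = A * u powr (Cu - real m)"
    unfolding A_def using a u0 by (simp add: powr_mult)
  finally have "\<bar>u ^ j * nderiv m lam (x * u)\<bar> \<le> u ^ j * (A * u powr (Cu - real m))"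
    using u0 by (simp add: abs_mult mult_left_mono)
  also have "\<dots> = A * u powr (real j + Cu - real m)"
    using u0 by (simp add: powr_realpow[symmetric] powr_add[symmetric] algebra_simps)
  also have "\<dots> \<le> A * u powr (Cu - 2)"
    using A u m by (intro mult_left_mono powr_mono) auto
  finally show ?thesis
    unfolding A_def .
qed

text \<open>On \<open>[T, \<infinity>)\<close> the majorant comes from the growth bound \<open>\<lambda>(s) \<le> \<lambda>(T) (s/T)\<^sup>C\<^sup>u\<close>, on the
  compact interval \<open>[2a, T]\<close> from continuity.\<close>

lemma hilbert_far_integrand_majorant:
  assumes a: "50 < a" and m: "j + 2 \<le> m"
  obtains A where "0 \<le> A"
    "\<And>x u. a \<le> x \<Longrightarrow> 2 \<le> u \<Longrightarrow> \<bar>u ^ j * nderiv m lam (x * u)\<bar> \<le> A * u powr (Cu - 2)"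
proof -
  have sub: "{2 * a..T} \<subseteq> {50<..}"
    using a by auto
  obtain Mc where Mc: "0 \<le> Mc" "\<And>s. s \<in> {2 * a..T} \<Longrightarrow> \<bar>nderiv m lam s\<bar> \<le> Mc"
    using continuous_on_compact_bound[OF compact_Icc smooth_on_continuous_on[OF smooth_lam sub, of m]]
    by auto
  define A1 where "A1 = D m * lam T * T powr (- Cu) * a powr (Cu - real m)"
  define A2 where "A2 = Mc * (T / a) ^ j * (T / a) powr (- (Cu - 2))"
  have A: "0 \<le> A1" "0 \<le> A2"
    unfolding A1_def A2_def using D_nonneg[of m] lam_pos_ge_T[of T] Mc a T_gt_100 by auto
  have "\<bar>u ^ j * nderiv m lam (x * u)\<bar> \<le> (A1 + A2) * u powr (Cu - 2)" if x: "a \<le> x" and u: "2 \<le> u" for x u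
  proof (cases "T \<le> x * u")
    case True
    then have "\<bar>u ^ j * nderiv m lam (x * u)\<bar> \<le> A1 * u powr (Cu - 2)"
      unfolding A1_def using abs_scaled_nderiv_lam_le[of a x u j m] a x u m by simp
    moreover have "0 \<le> A2 * u powr (Cu - 2)"
      using A by simp
    ultimately show ?thesis
      unfolding distrib_right by linarith
  next
    case False
    have au: "a * u \<le> x * u" "a * 2 \<le> a * u"
      using a x u by (auto intro: mult_right_mono mult_left_mono)
    then have "a * u \<le> T"
      using False by linarith
    then have uT: "u \<le> T / a"
      using a by (simp add: field_simps)
    have xu: "x * u \<in> {2 * a..T}"
      using au False by auto
    have "\<bar>u ^ j * nderiv m lam (x * u)\<bar> \<le> A2 * u powr (Cu - 2)"
      unfolding A2_def using abs_power_mult_le_powr[OF _ uT Mc(2)[OF xu], of "Cu - 2" j] u Cu_less by simp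
    moreover have "0 \<le> A1 * u powr (Cu - 2)"
      using A by simp
    ultimately show ?thesis
      unfolding distrib_right by linarith
  qed
  moreover have "0 \<le> A1 + A2"
    using A by simp
  ultimately show ?thesis
    using that by blast
qed

lemma absolutely_integrable_hilbert_far_integrand:
  assumes x: "50 < x" and m: "j + 2 \<le> m"
  shows "(\<lambda>u. u ^ j * nderiv m lam (x * u) / (u - 1)) absolutely_integrable_on {2..}"
proof -
  obtain A where "0 \<le> A"
    and A: "\<And>y u. x \<le> y \<Longrightarrow> 2 \<le> u \<Longrightarrow> \<bar>u ^ j * nderiv m lam (y * u)\<bar> \<le> A * u powr (Cu - 2)"
    by (fact hilbert_far_integrand_majorant[OF x m])
  show ?thesis
  proof (rule absolutely_integrable_continuous_dominated[OF _ _ integrable_powr_Cu_minus_2[of A]])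
    have "(\<lambda>u. x * u) ` {2..} \<subseteq> {50<..}"
      using less_mult_of_one_le[of 50 x] x by auto
    then have "continuous_on {2..} (\<lambda>u. nderiv m lam (x * u))"
      by (intro continuous_on_compose2[OF smooth_on_continuous_on[OF smooth_lam order_refl, of m]]
          continuous_intros)
    then show "continuous_on {2..} (\<lambda>u. u ^ j * nderiv m lam (x * u) / (u - 1))"
      by (auto intro!: continuous_intros)
    show "\<bar>u ^ j * nderiv m lam (x * u) / (u - 1)\<bar> \<le> A * u powr (Cu - 2)" if "u \<in> {2..}" for u
    proof -
      have u: "2 \<le> u"
        using that by simp
      show ?thesis
        by (rule order_trans[OF abs_divide_pred_le[OF u] A[OF order_refl u]])
    qed
  qed auto
qed

lemma hilbert_far_has_real_derivative:
  assumes t: "50 < t" and m: "j + 2 \<le> m"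
  shows "(hilbert_far j (nderiv m lam) has_real_derivative hilbert_far (Suc j) (nderiv (Suc m) lam) t) (at t)"
proof -
  define \<delta> where "\<delta> = (t - 50) / 2"
  have \<delta>: "50 < t - \<delta>" "0 < \<delta>"
    unfolding \<delta>_def using t by (simp_all add: field_simps)
  have m': "Suc j + 2 \<le> Suc m"
    using m by simp
  obtain A where "0 \<le> A" and A: "\<And>y u. t - \<delta> \<le> y \<Longrightarrow> 2 \<le> u \<Longrightarrow>
      \<bar>u ^ Suc j * nderiv (Suc m) lam (y * u)\<bar> \<le> A * u powr (Cu - 2)"
    by (fact hilbert_far_integrand_majorant[OF \<delta>(1) m'])
  have ball: "t - \<delta> \<le> x" "50 < x" if "x \<in> ball t \<delta>" for x
    using that \<delta> by (auto simp: dist_real_def)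
  show ?thesis
    unfolding hilbert_far_def
  proof (rule has_real_derivative_integral_dominated[where U = "ball t \<delta>" and h = "\<lambda>u. A * u powr (Cu - 2)"])
    fix x u
    assume x: "x \<in> ball t \<delta>" and u: "u \<in> {2::real..}"
    have xu: "x * u \<in> {50<..}"
      using less_mult_of_one_le[of 50 x u] ball(2)[OF x] u by simp
    have "((\<lambda>x. x * u) has_real_derivative u) (at x)"
      by (auto intro!: derivative_eq_intros)
    from DERIV_chain2[OF smooth_on_has_real_derivative_nderiv[OF smooth_lam xu, of m] this]
    have "((\<lambda>x. u ^ j * nderiv m lam (x * u) / (u - 1)) has_real_derivative
        u ^ j * (nderiv (Suc m) lam (x * u) * u) / (u - 1)) (at x)"
      by (intro DERIV_cdivide DERIV_cmult)
    then show "((\<lambda>x. u ^ j * nderiv m lam (x * u) / (u - 1)) has_real_derivative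
        u ^ Suc j * nderiv (Suc m) lam (x * u) / (u - 1)) (at x)"
      by (rule DERIV_cong) (simp add: algebra_simps)
    have "2 \<le> u"
      using u by simp
    then show "\<bar>u ^ Suc j * nderiv (Suc m) lam (x * u) / (u - 1)\<bar> \<le> A * u powr (Cu - 2)"
      by (intro order_trans[OF abs_divide_pred_le A[OF ball(1)[OF x]]])
  next
    fix x
    assume "x \<in> ball t \<delta>"
    then show "(\<lambda>u. u ^ j * nderiv m lam (x * u) / (u - 1)) integrable_on {2..}"
      using absolutely_integrable_hilbert_far_integrand[OF ball(2) m] by (auto simp: absolutely_integrable_on_def)
  qed (use \<delta>(2) integrable_powr_Cu_minus_2 in simp_all)
qed

lemma nderiv_hilbert_far:
  assumes "2 \<le> m" "50 < x"
  shows "nderiv j (hilbert_far 0 (nderiv m lam)) x = hilbert_far j (nderiv (m + j) lam) x"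
  using assms(2)
proof (induction j arbitrary: x)
  case 0
  then show ?case by simp
next
  case (Suc j)
  have "nderiv (Suc j) (hilbert_far 0 (nderiv m lam)) x = deriv (hilbert_far j (nderiv (m + j) lam)) x"
    unfolding nderiv_Suc_deriv
    by (rule deriv_cong_ev) (use Suc eventually_nhds_in_open[of "{50<..}" x] in \<open>auto elim!: eventually_mono\<close>)
  also have "\<dots> = hilbert_far (Suc j) (nderiv (Suc (m + j)) lam) x"
    by (rule DERIV_imp_deriv[OF hilbert_far_has_real_derivative]) (use assms Suc.prems in auto)
  finally show ?case
    by simp
qed

lemma smooth_on_hilbert_far:
  assumes "2 \<le> m"
  shows "smooth_on {50<..} (hilbert_far 0 (nderiv m lam))"
  unfolding smooth_on_def
proof (intro allI ballI)
  fix j and x :: real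
  assume x: "x \<in> {50<..}"
  have "hilbert_far j (nderiv (m + j) lam) differentiable (at x)"
    using hilbert_far_has_real_derivative[of x j "m + j"] assms x by (auto simp: real_differentiable_def)
  then show "nderiv j (hilbert_far 0 (nderiv m lam)) differentiable (at x)"
    by (rule differentiable_cong_open[of _ _ "{50<..}"]) (use nderiv_hilbert_far assms x in auto)
qed

lemma abs_hilbert_far_nderiv_lam_le:
  assumes t: "T \<le> t" and m: "j + 2 \<le> m"
  shows "\<bar>hilbert_far j (nderiv m lam) t\<bar> \<le> D m * integral {2..} (\<lambda>u. u powr (Cu - 2)) * lam t / t ^ m"
proof -
  have t0: "50 < t" "0 < t" and lt: "0 < lam t"
    using ge_T_pos_in_domain[OF t] lam_pos_ge_T[OF t] by auto
  define c where "c = D m * lam t / t ^ m"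
  have "\<bar>hilbert_far j (nderiv m lam) t\<bar> \<le> integral {2..} (\<lambda>u. c * u powr (Cu - 2))"
    unfolding hilbert_far_def
  proof (rule abs_integral_le_integral)
    show "(\<lambda>u. u ^ j * nderiv m lam (t * u) / (u - 1)) integrable_on {2..}"
      using absolutely_integrable_hilbert_far_integrand[OF t0(1) m] by (auto simp: absolutely_integrable_on_def)
    fix u :: real
    assume u: "u \<in> {2..}"
    then have u0: "0 < u" and tu1: "t * 1 \<le> t * u"
      using t0 by (auto intro: mult_left_mono)
    then have tu: "T \<le> t * u"
      using t by linarith
    have growth: "lam (t * u) \<le> lam t * u powr Cu"
      using lam_le_growth[OF t, of "t * u"] tu1 t0 by simp
    have "\<bar>u ^ j * nderiv m lam (t * u) / (u - 1)\<bar> \<le> \<bar>u ^ j * nderiv m lam (t * u)\<bar>"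
      using abs_divide_pred_le u by simp
    also have "\<dots> = u ^ j * \<bar>nderiv m lam (t * u)\<bar>"
      using u0 by (simp add: abs_mult)
    also have "\<dots> \<le> u ^ j * (D m * lam (t * u) / (t * u) ^ m)"
      using nderiv_lam_bound[OF tu] u0 by (intro mult_left_mono) auto
    also have "\<dots> \<le> u ^ j * (D m * (lam t * u powr Cu) / (t * u) ^ m)"
      using growth D_nonneg[of m] u0 t0 by (intro mult_left_mono divide_right_mono) auto
    also have "\<dots> = c * u powr (real j + Cu - real m)"
      unfolding c_def using u0 t0 by (simp add: powr_realpow[symmetric] powr_add powr_diff power_mult_distrib field_simps)
    also have "\<dots> \<le> c * u powr (Cu - 2)"
      using m u D_nonneg[of m] lt t0 unfolding c_def by (intro mult_left_mono powr_mono) auto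
    finally show "\<bar>u ^ j * nderiv m lam (t * u) / (u - 1)\<bar> \<le> c * u powr (Cu - 2)" .
  qed (rule integrable_powr_Cu_minus_2)
  then show ?thesis
    unfolding c_def by (simp add: field_simps)
qed

lemma symbol_hilbert_far: "symbol (\<lambda>t. lam t / t\<^sup>2) (hilbert_far 0 (nderiv 2 lam))"
  unfolding symbol_def
proof (intro conjI allI)
  show "smooth_on {50<..} (hilbert_far 0 (nderiv 2 lam))"
    by (rule smooth_on_hilbert_far) simp
  fix j
  define c where "c = D (2 + j) * integral {2..} (\<lambda>u. u powr (Cu - 2))"
  have "\<bar>nderiv j (hilbert_far 0 (nderiv 2 lam)) t\<bar> \<le> c * (lam t / t\<^sup>2) / t ^ j" if t: "T \<le> t" for t
  proof -
    have "nderiv j (hilbert_far 0 (nderiv 2 lam)) t = hilbert_far j (nderiv (2 + j) lam) t"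
      by (rule nderiv_hilbert_far) (use ge_T_pos_in_domain[OF t] in auto)
    also have "\<bar>\<dots>\<bar> \<le> c * lam t / t ^ (2 + j)"
      unfolding c_def by (rule abs_hilbert_far_nderiv_lam_le[OF t]) simp
    finally show ?thesis
      by (simp add: power_add field_simps power2_eq_square)
  qed
  then show "\<exists>c. \<forall>t\<ge>T. \<bar>nderiv j (hilbert_far 0 (nderiv 2 lam)) t\<bar> \<le> c * (lam t / t\<^sup>2) / t ^ j"
    by blast
qed

end

section \<open>The function \<open>H\<close> and its weight\<close>

lemma ln_le_root4: "0 < t \<Longrightarrow> ln t \<le> 4 * t powr (1/4)" for t :: real
  using ln_le_minus_one[of "t powr (1/4)"] by (simp add: ln_powr)

context lambda_growth
begin

definition lam_weight :: "real \<Rightarrow> real" where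
  "lam_weight t = lam t * ln t / t\<^sup>2"

lemma weight_lam_weight: "weight lam_weight"
  unfolding weight_def lam_weight_def
proof (intro allI impI)
  fix t
  assume t: "T \<le> t"
  then have "0 < lam t" "1 \<le> ln t"
    using lam_pos_ge_T ln_ge_1[OF exp_1_le_T] by auto
  then show "0 \<le> lam t * ln t / t\<^sup>2"
    by simp
qed

lemma symbol_lam_weight:
  assumes "symbol (\<lambda>t. lam t / t\<^sup>2) f"
  shows "symbol lam_weight f"
proof (rule symbol_mono[OF assms weight_lam, where K = 1])
  fix t
  assume t: "T \<le> t"
  have "lam t / t\<^sup>2 * 1 \<le> lam t / t\<^sup>2 * ln t"
    using ln_ge_1[OF exp_1_le_T t] lam_pos_ge_T[OF t] by (intro mult_left_mono) auto
  then show "lam t / t\<^sup>2 \<le> 1 * lam_weight t"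
    by (simp add: lam_weight_def)
qed

text \<open>\<open>H = 4 H_core \<psi>\<close>, with the two Hilbert-type integrals rescaled to the unit scale.\<close>

definition H_core :: "real \<Rightarrow> real" where
  "H_core t = (ln 2 - 1/2) * nderiv 2 lam t + hilbert_near 0 (nderiv 2 lam) t
     + nderiv 2 lam t * (ln t - ln (lam t)) + hilbert_far 0 (nderiv 2 lam) t
     - (nderiv 1 lam t)\<^sup>2 / (2 * lam t)"

lemma symbol_H_core: "symbol lam_weight H_core"
proof -
  have lam2: "symbol lam_weight (nderiv 2 lam)"
    by (rule symbol_lam_weight[OF symbol_nderiv_lam])
  have near: "symbol lam_weight (hilbert_near 0 (nderiv 2 lam))"
    by (rule symbol_lam_weight[OF symbol_hilbert_near])
  have far: "symbol lam_weight (hilbert_far 0 (nderiv 2 lam))"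
    by (rule symbol_lam_weight[OF symbol_hilbert_far])
  have log: "symbol lam_weight (\<lambda>t. nderiv 2 lam t * (1 * ln t + (-1) * ln (lam t)))"
  proof (rule symbol_mono[OF symbol_mult[OF symbol_nderiv_lam
        symbol_linear[OF symbol_ln[OF _ exp_1_le_T] symbol_ln_lam weight_ln[OF exp_1_le_T]]
        weight_lam weight_ln[OF exp_1_le_T]], where K = 1])
    show "weight (\<lambda>t. lam t / t\<^sup>2 * ln t)"
      by (intro weight_mult weight_lam weight_ln exp_1_le_T)
    show "lam t / t\<^sup>2 * ln t \<le> 1 * lam_weight t" for t
      by (simp add: lam_weight_def)
  qed auto
  have square: "symbol lam_weight (\<lambda>t. nderiv 1 lam t * log_deriv_lam t)"
  proof (rule symbol_mono[OF symbol_mult[OF symbol_nderiv_lam symbol_log_deriv_lam weight_lam weight_inverse],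
        where K = 1])
    show "weight (\<lambda>t. lam t / t ^ 1 * (1 / t))"
      by (intro weight_mult weight_lam weight_inverse)
    fix t
    assume t: "T \<le> t"
    have "lam t / t\<^sup>2 * 1 \<le> lam t / t\<^sup>2 * ln t"
      using ln_ge_1[OF exp_1_le_T t] lam_pos_ge_T[OF t] by (intro mult_left_mono) auto
    then show "lam t / t ^ 1 * (1 / t) \<le> 1 * lam_weight t"
      by (simp add: lam_weight_def power2_eq_square)
  qed
  have "symbol lam_weight (\<lambda>t. 1 * (1 * (1 * ((ln 2 - 1/2) * nderiv 2 lam t + 1 * hilbert_near 0 (nderiv 2 lam) t)
      + 1 * (nderiv 2 lam t * (1 * ln t + (-1) * ln (lam t)))) + 1 * hilbert_far 0 (nderiv 2 lam) t)
      + (- 1/2) * (nderiv 1 lam t * log_deriv_lam t))"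
    by (intro symbol_linear lam2 near far log square weight_lam_weight)
  then show ?thesis
  proof (rule symbol_cong)
    fix t :: real
    assume "t \<in> {50<..}"
    then have "0 < lam t"
      using lam_pos by simp
    then show "1 * (1 * (1 * ((ln 2 - 1/2) * nderiv 2 lam t + 1 * hilbert_near 0 (nderiv 2 lam) t)
      + 1 * (nderiv 2 lam t * (1 * ln t + (-1) * ln (lam t)))) + 1 * hilbert_far 0 (nderiv 2 lam) t)
      + (- 1/2) * (nderiv 1 lam t * log_deriv_lam t) = H_core t"
      unfolding H_core_def log_deriv_lam_def by (simp add: power2_eq_square field_simps)
  qed
qed

lemma lam_weight_le_powr:
  assumes t: "T \<le> t"
  shows "lam_weight t \<le> (4 * lam T * T powr (- Cu)) * t powr (Cu - 7/4)"
proof -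
  have t0: "0 < t" "0 < T" and lt: "0 < lam t" and lnt: "0 \<le> ln t"
    using ge_T_pos_in_domain[OF t] T_gt_100 lam_pos_ge_T[OF t] ln_ge_1[OF exp_1_le_T t] by auto
  have "lam_weight t \<le> (lam T * (t / T) powr Cu) * (4 * t powr (1/4)) / t\<^sup>2"
    unfolding lam_weight_def
    using lam_le_growth[OF order_refl t] ln_le_root4[OF t0(1)] lt lnt
    by (intro divide_right_mono mult_mono) auto
  also have "\<dots> = (4 * lam T * T powr (- Cu)) * t powr (Cu - 7/4)"
  proof -
    have "(t / T) powr Cu = T powr (- Cu) * t powr Cu"
      using t0 by (simp only: powr_divide powr_minus) (simp add: divide_inverse)
    moreover have "t powr (Cu - 7/4) = t powr Cu * t powr (1/4) / t\<^sup>2"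
    proof -
      have "t powr (Cu - 7/4) = t powr (Cu + 1/4 - 2)"
        by simp
      also have "\<dots> = t powr Cu * t powr (1/4) / t powr 2"
        by (simp only: powr_diff powr_add)
      finally show ?thesis
        using t0 by (simp add: powr_numeral)
    qed
    ultimately show ?thesis
      by (simp add: mult_ac)
  qed
  finally show ?thesis .
qed

lemma absolutely_integrable_lam_weight: "lam_weight absolutely_integrable_on {T..}"
proof (rule absolutely_integrable_continuous_dominated
    [where g = "\<lambda>t. (4 * lam T * T powr (- Cu)) * t powr (Cu - 7/4)"])
  have "continuous_on {T..} lam"
    using smooth_on_continuous_on[OF smooth_lam atLeast_T_subset, of 0] by simp
  then show "continuous_on {T..} lam_weight"
    unfolding lam_weight_def using T_gt_100 by (auto intro!: continuous_intros)
  have "(\<lambda>t. t powr (Cu - 7/4)) integrable_on {T..}"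
    using has_integral_powr_to_inf[of "Cu - 7/4" T] Cu_less T_gt_100 by (auto simp: integrable_on_def)
  from integrable_cmul[OF this, of "4 * lam T * T powr (- Cu)"]
  show "(\<lambda>t. (4 * lam T * T powr (- Cu)) * t powr (Cu - 7/4)) integrable_on {T..}"
    by simp
  show "\<bar>lam_weight t\<bar> \<le> (4 * lam T * T powr (- Cu)) * t powr (Cu - 7/4)" if "t \<in> {T..}" for t
    using weight_lam_weight lam_weight_le_powr that by (simp add: weight_def)
qed auto

lemma lam_weight_tendsto_0: "(lam_weight \<longlongrightarrow> 0) at_top"
proof (rule Lim_null_comparison)
  show "eventually (\<lambda>t. norm (lam_weight t) \<le> (4 * lam T * T powr (- Cu)) * t powr (Cu - 7/4)) at_top"
    using eventually_ge_at_top[of T]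
  proof eventually_elim
    case (elim t)
    then show ?case
      using weight_lam_weight lam_weight_le_powr[OF elim] by (simp add: weight_def)
  qed
  have "((\<lambda>t. t powr (Cu - 7/4)) \<longlongrightarrow> 0) at_top"
    by (rule tendsto_neg_powr) (use Cu_less in \<open>auto intro: filterlim_ident\<close>)
  from tendsto_mult_right_zero[OF this, of "4 * lam T * T powr (- Cu)"]
  show "((\<lambda>t. (4 * lam T * T powr (- Cu)) * t powr (Cu - 7/4)) \<longlongrightarrow> 0) at_top"
    by simp
qed

end

sublocale lambda_growth \<subseteq> W: sine_transform T lam_weight
proof unfold_locales
  show "0 < T"
    using T_gt_100 by simp
  show "symbol_calculus.weight T lam_weight"
    using weight_lam_weight unfolding weight_def symbol_calculus.weight_def[OF symbol_calculus_axioms] .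
  show "lam_weight integrable_on {T..}"
    using absolutely_integrable_lam_weight by (simp add: absolutely_integrable_on_def)
  show "(lam_weight \<longlongrightarrow> 0) at_top"
    by (rule lam_weight_tendsto_0)
qed auto

section \<open>Small frequencies\<close>

context lambda_growth
begin

lemma ln_le_scaled_root4:
  assumes R: "T \<le> R" and t: "R \<le> t"
  shows "ln t \<le> 5 * ln R * (t / R) powr (1/4)"
proof -
  have R0: "0 < R" and lnR: "1 \<le> ln R"
    using ge_T_pos_in_domain[OF R] ln_ge_1[OF exp_1_le_T R] by auto
  have q: "1 \<le> (t / R) powr (1/4)"
    using t R0 by (intro ge_one_powr_ge_zero) (auto simp: field_simps)
  have "ln t = ln R + ln (t / R)"
    using R0 t by (simp add: ln_div)
  also have "ln (t / R) \<le> 4 * (t / R) powr (1/4)"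
    using R0 t by (intro ln_le_root4) simp
  also have "ln R \<le> ln R * (t / R) powr (1/4)"
    using q lnR by (simp add: mult_le_cancel_left1)
  also have "4 * (t / R) powr (1/4) \<le> 4 * ln R * (t / R) powr (1/4)"
    using mult_right_mono[OF lnR, of "(t / R) powr (1/4)"] q by simp
  finally show ?thesis
    by simp
qed

text \<open>Beyond \<open>R = 1/\<xi>\<close> the weight decays like \<open>t\<^sup>C\<^sup>u\<^sup>+\<^sup>1\<^sup>/\<^sup>4\<^sup>-\<^sup>2\<close>, which is integrable because \<open>Cu < 3/4\<close>.\<close>

lemma lam_weight_tail_le:
  assumes R: "T \<le> R" and t: "R \<le> t"
  shows "lam_weight t \<le> 5 * lam R * ln R * R powr (- (Cu + 1/4)) * t powr (Cu + 1/4 - 2)"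
proof -
  define a where "a = Cu + 1/4"
  have t0: "0 < t" "0 < R" and lt: "0 < lam t" and lnt: "1 \<le> ln t"
    using ge_T_pos_in_domain[OF R] R t lam_pos_ge_T[of t] ln_ge_1[OF exp_1_le_T, of t] by auto
  have "lam_weight t \<le> (lam R * (t / R) powr Cu) * (5 * ln R * (t / R) powr (1/4)) / t\<^sup>2"
    unfolding lam_weight_def
    using lam_le_growth[OF R t] ln_le_scaled_root4[OF R t] lt lnt by (intro divide_right_mono mult_mono) auto
  also have "\<dots> = 5 * lam R * ln R * ((t / R) powr a) / t\<^sup>2"
    by (simp add: a_def powr_add mult_ac)
  also have "(t / R) powr a = t powr a * R powr (- a)"
    using t0 by (simp only: powr_divide powr_minus) (simp add: divide_inverse)
  also have "5 * lam R * ln R * (t powr a * R powr (- a)) / t\<^sup>2 = 5 * lam R * ln R * R powr (- a) * (t powr a / t\<^sup>2)"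
    by simp
  also have "t powr a / t\<^sup>2 = t powr (a - 2)"
    using t0 by (simp add: powr_diff powr_numeral)
  finally show ?thesis
    unfolding a_def .
qed

lemma integrable_lam_ln_divide:
  assumes "50 < a"
  shows "(\<lambda>t. lam t * ln t / t) integrable_on {a..b}"
proof -
  have "{a..b} \<subseteq> {50<..}"
    using assms by auto
  then have "continuous_on {a..b} lam"
    using smooth_on_continuous_on[OF smooth_lam, of "{a..b}" 0] by simp
  then show ?thesis
    using assms by (intro integrable_continuous_interval) (auto intro!: continuous_intros)
qed

lemma integral_lam_ln_divide_nonneg:
  assumes "50 < a"
  shows "0 \<le> integral {a..b} (\<lambda>t. lam t * ln t / t)"
proof (rule integral_nonneg[OF integrable_lam_ln_divide[OF assms]])
  fix t
  assume "t \<in> {a..b}"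
  then have "0 < lam t" "1 < t"
    using assms lam_pos by auto
  then show "0 \<le> lam t * ln t / t"
    by simp
qed

lemma has_integral_lam_weight_tail_majorant:
  assumes R: "T \<le> R"
  shows "((\<lambda>t. if t \<in> {R..} then 5 * lam R * ln R * R powr (- (Cu + 1/4)) * t powr (Cu + 1/4 - 2) else 0)
    has_integral 5 / (3/4 - Cu) * (lam R * ln R) / R) {0..}"
proof -
  define a where "a = Cu + 1/4"
  have a: "a - 2 < -1"
    using Cu_less by (simp add: a_def)
  have R0: "0 < R"
    using ge_T_pos_in_domain[OF R] by simp
  have "((\<lambda>t. t powr (a - 2)) has_integral R powr (a - 1) / (1 - a)) {R..}"
    using has_integral_powr_to_inf[OF a R0] by (simp add: minus_divide_right)
  from has_integral_mult_right[OF this, of "5 * lam R * ln R * R powr (- a)"]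
  have tail: "((\<lambda>t. 5 * lam R * ln R * R powr (- a) * t powr (a - 2)) has_integral
      5 * lam R * ln R * R powr (- a) * (R powr (a - 1) / (1 - a))) {R..}"
    by (simp add: mult.assoc)
  have "R powr (- a) * R powr (a - 1) = R powr (-1)"
    using R0 by (simp add: powr_add[symmetric])
  also have "\<dots> = 1 / R"
    using R0 by (simp add: powr_minus_divide)
  finally have e: "R powr (- a) * R powr (a - 1) = 1 / R" .
  have "5 * lam R * ln R * R powr (- a) * (R powr (a - 1) / (1 - a)) =
      5 * lam R * ln R * (R powr (- a) * R powr (a - 1)) / (1 - a)"
    by (simp add: mult.assoc)
  also have "\<dots> = 5 / (3/4 - Cu) * (lam R * ln R) / R"
    unfolding e unfolding a_def using R0 Cu_less by (simp add: field_simps)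
  finally show ?thesis
    using tail R0 unfolding a_def by (subst has_integral_restrict) auto
qed

lemma small_xi_majorant_ge_T:
  assumes R: "T \<le> R" and c: "0 \<le> c"
  obtains B where "B integrable_on {0..}" "\<And>t. 0 \<le> t \<Longrightarrow> 0 \<le> B t"
    "\<And>t. T \<le> t \<Longrightarrow> c * lam_weight t * min t R \<le> B t"
    "integral {0..} B = c * integral {T..R} (\<lambda>t. lam t * ln t / t) + 5 * c / (3/4 - Cu) * (lam R * ln R)"
proof -
  define tail where "tail t =
    (if t \<in> {R..} then 5 * lam R * ln R * R powr (- (Cu + 1/4)) * t powr (Cu + 1/4 - 2) else 0)" for t
  define B1 where "B1 t = (if t \<in> {T..R} then c * (lam t * ln t / t) else 0)" for t
  have R0: "0 < R" "0 < lam R" "0 < ln R"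
    using ge_T_pos_in_domain[OF R] lam_pos_ge_T[OF R] ln_ge_1[OF exp_1_le_T R] by auto
  have "50 < T"
    using T_gt_100 by simp
  from has_integral_mult_right[OF integrable_integral[OF integrable_lam_ln_divide[OF this, of R]], of c]
  have B1: "(B1 has_integral c * integral {T..R} (\<lambda>t. lam t * ln t / t)) {0..}"
    unfolding B1_def using T_gt_100 by (subst has_integral_restrict) auto
  have "((\<lambda>t. c * R * tail t) has_integral c * R * (5 / (3/4 - Cu) * (lam R * ln R) / R)) {0..}"
    unfolding tail_def by (intro has_integral_mult_right has_integral_lam_weight_tail_majorant R)
  moreover have "c * R * (5 / (3/4 - Cu) * (lam R * ln R) / R) = 5 * c / (3/4 - Cu) * (lam R * ln R)"
    using R0 Cu_less by (simp add: field_simps)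
  ultimately have B2: "((\<lambda>t. c * R * tail t) has_integral 5 * c / (3/4 - Cu) * (lam R * ln R)) {0..}"
    by simp
  show ?thesis
  proof (rule that[of "\<lambda>t. B1 t + c * R * tail t"])
    show "(\<lambda>t. B1 t + c * R * tail t) integrable_on {0..}"
      using B1 B2 by (auto intro: integrable_add)
    show "integral {0..} (\<lambda>t. B1 t + c * R * tail t) =
        c * integral {T..R} (\<lambda>t. lam t * ln t / t) + 5 * c / (3/4 - Cu) * (lam R * ln R)"
      using integral_unique[OF has_integral_add[OF B1 B2]] by simp
    have nonneg: "0 \<le> B1 t" "0 \<le> c * R * tail t" for t
    proof -
      have "0 \<le> c * (lam t * ln t / t)" if "T \<le> t"
        using c lam_pos_ge_T[OF that] ln_ge_1[OF exp_1_le_T that] ge_T_pos_in_domain[OF that] by simp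
      then show "0 \<le> B1 t"
        by (simp add: B1_def)
      show "0 \<le> c * R * tail t"
        using c R0 by (simp add: tail_def)
    qed
    then show "0 \<le> B1 t + c * R * tail t" for t
      by (simp add: add_nonneg_nonneg)
    fix t
    assume t: "T \<le> t"
    show "c * lam_weight t * min t R \<le> B1 t + c * R * tail t"
    proof (cases "t \<le> R")
      case True
      then have "c * lam_weight t * min t R = B1 t"
        using t ge_T_pos_in_domain[OF t] by (simp add: B1_def lam_weight_def power2_eq_square)
      then show ?thesis
        using nonneg[of t] by simp
    next
      case False
      then have "c * lam_weight t * min t R \<le> c * R * tail t"
        using lam_weight_tail_le[OF R, of t] c R0 by (simp add: tail_def mult_left_mono mult.commute)
      then show ?thesis
        using nonneg[of t] by simp
    qed
  qed
qed

lemma small_xi_majorant: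
  assumes c: "0 \<le> c" and R: "0 \<le> R"
  obtains B where "B integrable_on {0..}" "\<And>t. 0 \<le> t \<Longrightarrow> 0 \<le> B t"
    "\<And>t. T \<le> t \<Longrightarrow> c * lam_weight t * min t R \<le> B t"
    "integral {0..} B = c * R * integral {T..} lam_weight"
proof -
  define B where "B t = (if t \<in> {T..} then c * R * lam_weight t else 0)" for t
  have "(B has_integral c * R * integral {T..} lam_weight) {0..}"
    unfolding B_def using T_gt_100 W.integrable_w
    by (subst has_integral_restrict) (auto intro: has_integral_mult_right simp: integrable_integral)
  moreover have "0 \<le> B t" for t
    using c R W.weight_w by (simp add: B_def W.weight_def)
  moreover have "c * lam_weight t * min t R \<le> B t" if t: "T \<le> t" for t
  proof -
    have "0 \<le> c * lam_weight t"
      using c t W.weight_w by (simp add: W.weight_def)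
    then have "c * lam_weight t * min t R \<le> c * lam_weight t * R"
      by (intro mult_left_mono) auto
    then show ?thesis
      using t by (simp add: B_def mult_ac)
  qed
  ultimately show ?thesis
    using that integrable_integral integral_unique by blast
qed

lemma abs_vhat_le_inverse:
  assumes p: "W.admissible p"
  shows "\<exists>C. \<forall>\<xi>>0. \<bar>W.vhat p \<xi>\<bar> \<le> C / \<xi>"
proof -
  obtain c where c: "0 \<le> c"
    and majorant: "\<And>\<xi> B. 0 < \<xi> \<Longrightarrow> B integrable_on {0..} \<Longrightarrow> (\<And>t. 0 \<le> t \<Longrightarrow> 0 \<le> B t) \<Longrightarrow>
      (\<And>t. T \<le> t \<Longrightarrow> c * lam_weight t * min t (1 / \<xi>) \<le> B t) \<Longrightarrow> \<bar>W.vhat p \<xi>\<bar> \<le> integral {0..} B"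
    by (fact W.abs_vhat_le_integral_majorant[OF p])
  have "\<bar>W.vhat p \<xi>\<bar> \<le> c * integral {T..} lam_weight / \<xi>" if \<xi>: "0 < \<xi>" for \<xi>
  proof -
    obtain B where "B integrable_on {0..}" "\<And>t. 0 \<le> t \<Longrightarrow> 0 \<le> B t"
      "\<And>t. T \<le> t \<Longrightarrow> c * lam_weight t * min t (1 / \<xi>) \<le> B t"
      and B: "integral {0..} B = c * (1 / \<xi>) * integral {T..} lam_weight"
      by (fact small_xi_majorant[OF c less_imp_le[OF divide_pos_pos[OF zero_less_one \<xi>]]])
    then have "\<bar>W.vhat p \<xi>\<bar> \<le> integral {0..} B"
      by (intro majorant[OF \<xi>])
    then show ?thesis
      unfolding B by simp
  qed
  then show ?thesis
    by blast
qed

lemma abs_vhat_le_large_scale: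
  assumes p: "W.admissible p"
  shows "\<exists>C. \<forall>\<xi>>0. T \<le> 1 / \<xi> \<longrightarrow>
    \<bar>W.vhat p \<xi>\<bar> \<le> C * integral {T..1 / \<xi>} (\<lambda>t. lam t * ln t / t) + C * (lam (1 / \<xi>) * ln (1 / \<xi>))"
proof -
  obtain c where c: "0 \<le> c"
    and majorant: "\<And>\<xi> B. 0 < \<xi> \<Longrightarrow> B integrable_on {0..} \<Longrightarrow> (\<And>t. 0 \<le> t \<Longrightarrow> 0 \<le> B t) \<Longrightarrow>
      (\<And>t. T \<le> t \<Longrightarrow> c * lam_weight t * min t (1 / \<xi>) \<le> B t) \<Longrightarrow> \<bar>W.vhat p \<xi>\<bar> \<le> integral {0..} B"
    by (fact W.abs_vhat_le_integral_majorant[OF p])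
  define C where "C = c + 5 * c / (3/4 - Cu)"
  have C: "c \<le> C" "5 * c / (3/4 - Cu) \<le> C"
    unfolding C_def using c Cu_less by auto
  have "\<bar>W.vhat p \<xi>\<bar> \<le> C * integral {T..1 / \<xi>} (\<lambda>t. lam t * ln t / t) + C * (lam (1 / \<xi>) * ln (1 / \<xi>))"
    if \<xi>: "0 < \<xi>" and R: "T \<le> 1 / \<xi>" for \<xi>
  proof -
    obtain B where "B integrable_on {0..}" "\<And>t. 0 \<le> t \<Longrightarrow> 0 \<le> B t"
      "\<And>t. T \<le> t \<Longrightarrow> c * lam_weight t * min t (1 / \<xi>) \<le> B t"
      and B: "integral {0..} B = c * integral {T..1 / \<xi>} (\<lambda>t. lam t * ln t / t)
        + 5 * c / (3/4 - Cu) * (lam (1 / \<xi>) * ln (1 / \<xi>))"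
      by (fact small_xi_majorant_ge_T[OF R c])
    then have "\<bar>W.vhat p \<xi>\<bar> \<le> integral {0..} B"
      by (intro majorant[OF \<xi>])
    also have "\<dots> \<le> C * integral {T..1 / \<xi>} (\<lambda>t. lam t * ln t / t) + C * (lam (1 / \<xi>) * ln (1 / \<xi>))"
    proof -
      have "0 \<le> integral {T..1 / \<xi>} (\<lambda>t. lam t * ln t / t)"
        using T_gt_100 by (intro integral_lam_ln_divide_nonneg) simp
      moreover have "0 \<le> lam (1 / \<xi>) * ln (1 / \<xi>)"
        using lam_pos_ge_T[OF R] ln_ge_1[OF exp_1_le_T R] by simp
      ultimately show ?thesis
        unfolding B using C by (intro add_mono mult_right_mono) auto
    qed
    finally show ?thesis .
  qed
  then show ?thesis
    by blast
qed

lemma lam_ln_lower_bound: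
  obtains m where "0 < m" "\<And>\<sigma>. \<sigma> \<in> {100..T} \<Longrightarrow> m \<le> lam \<sigma> * ln \<sigma>"
proof -
  have "{100..T} \<subseteq> {50<..}"
    by auto
  then have cont: "continuous_on {100..T} (\<lambda>\<sigma>. lam \<sigma> * ln \<sigma>)"
    using smooth_on_continuous_on[OF smooth_lam, of "{100..T}" 0] by (auto intro!: continuous_intros)
  have "{100..T} \<noteq> {}"
    using T_gt_100 by simp
  from continuous_attains_inf[OF compact_Icc this cont]
  obtain \<sigma>0 where \<sigma>0: "\<sigma>0 \<in> {100..T}" "\<And>\<sigma>. \<sigma> \<in> {100..T} \<Longrightarrow> lam \<sigma>0 * ln \<sigma>0 \<le> lam \<sigma> * ln \<sigma>"
    by blast
  moreover have "0 < lam \<sigma>0 * ln \<sigma>0"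
    using \<sigma>0(1) lam_pos[of \<sigma>0] by simp
  ultimately show ?thesis
    using that by blast
qed

lemma abs_vhat_small_xi:
  assumes p: "W.admissible p"
  obtains C where "\<And>\<xi>. 0 < \<xi> \<Longrightarrow> \<xi> \<le> 1/100 \<Longrightarrow>
    \<bar>W.vhat p \<xi>\<bar> \<le> C * integral {100..1 / \<xi>} (\<lambda>\<sigma>. lam \<sigma> * ln \<sigma> / \<sigma>) + C * lam (1 / \<xi>) * ln (1 / \<xi>)"
proof -
  obtain C1 where C1: "\<And>\<xi>. 0 < \<xi> \<Longrightarrow> \<bar>W.vhat p \<xi>\<bar> \<le> C1 / \<xi>"
    using abs_vhat_le_inverse[OF p] by blast
  obtain C2 where C2: "\<And>\<xi>. 0 < \<xi> \<Longrightarrow> T \<le> 1 / \<xi> \<Longrightarrow> \<bar>W.vhat p \<xi>\<bar> \<le>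
      C2 * integral {T..1 / \<xi>} (\<lambda>t. lam t * ln t / t) + C2 * (lam (1 / \<xi>) * ln (1 / \<xi>))"
    using abs_vhat_le_large_scale[OF p] by blast
  obtain m0 where m0: "0 < m0" "\<And>\<sigma>. \<sigma> \<in> {100..T} \<Longrightarrow> m0 \<le> lam \<sigma> * ln \<sigma>"
    by (fact lam_ln_lower_bound)
  define C where "C = max (max C2 0) (\<bar>C1\<bar> * T / m0)"
  have C: "C2 \<le> C" "0 \<le> C" "\<bar>C1\<bar> * T / m0 \<le> C"
    unfolding C_def by auto
  have "\<bar>W.vhat p \<xi>\<bar> \<le> C * integral {100..1 / \<xi>} (\<lambda>\<sigma>. lam \<sigma> * ln \<sigma> / \<sigma>) + C * lam (1 / \<xi>) * ln (1 / \<xi>)"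
    if \<xi>: "0 < \<xi>" "\<xi> \<le> 1/100" for \<xi>
  proof -
    define R where "R = 1 / \<xi>"
    have R: "100 \<le> R" "0 < lam R" "0 < ln R"
      using \<xi> lam_pos[of R] by (auto simp: R_def field_simps)
    define I where "I = integral {100..R} (\<lambda>\<sigma>. lam \<sigma> * ln \<sigma> / \<sigma>)"
    have I: "0 \<le> I"
      unfolding I_def by (rule integral_lam_ln_divide_nonneg) simp
    have "\<bar>W.vhat p \<xi>\<bar> \<le> C * I + C * (lam R * ln R)"
    proof (cases "T \<le> R")
      case True
      have "0 \<le> lam \<sigma> * ln \<sigma> / \<sigma>" if "\<sigma> \<in> {100..R}" for \<sigma>
        using that lam_pos[of \<sigma>] by simp
      then have "integral {T..R} (\<lambda>t. lam t * ln t / t) \<le> I"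
        unfolding I_def using T_gt_100 by (intro integral_subset_le integrable_lam_ln_divide) auto
      moreover have "0 \<le> integral {T..R} (\<lambda>t. lam t * ln t / t)"
        using T_gt_100 by (intro integral_lam_ln_divide_nonneg) simp
      ultimately have "C2 * integral {T..R} (\<lambda>t. lam t * ln t / t) + C2 * (lam R * ln R) \<le>
          C * I + C * (lam R * ln R)"
        using C R by (intro add_mono mult_mono) auto
      then show ?thesis
        using C2[OF \<xi>(1)] True unfolding R_def by linarith
    next
      case False
      have "C1 / \<xi> = C1 * R"
        by (simp add: R_def)
      also have "\<dots> \<le> \<bar>C1\<bar> * R"
        using R by (intro mult_right_mono) auto
      also have "\<dots> \<le> \<bar>C1\<bar> * T"
        using False by (intro mult_left_mono) auto
      also have "\<dots> = (\<bar>C1\<bar> * T / m0) * m0"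
        using m0 by simp
      also have "\<dots> \<le> C * (lam R * ln R)"
      proof (rule mult_mono)
        show "m0 \<le> lam R * ln R"
          using m0(2)[of R] False R by auto
      qed (use m0 C in auto)
      also have "\<dots> \<le> C * I + C * (lam R * ln R)"
        using C(2) I by simp
      finally show ?thesis
        using C1[OF \<xi>(1)] by linarith
    qed
    then show ?thesis
      by (simp add: R_def I_def)
  qed
  then show ?thesis
    by (rule that)
qed

end

section \<open>The estimates for \<open>v\<^sub>2\<^sub>,\<^sub>0\<close>\<close>

locale lambda_cutoff = lambda_growth +
  fixes psi :: "real \<Rightarrow> real"
  assumes smooth_psi: "smooth_on {0<..} psi" and psi_range: "\<forall>x\<ge>0. 0 \<le> psi x \<and> psi x \<le> 1"
    and psi_eq_0: "\<forall>x. 0 \<le> x \<and> x \<le> T \<longrightarrow> psi x = 0" and psi_eq_1: "\<forall>x\<ge>2 * T. psi x = 1"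
begin

lemma symbol_psi: "symbol (\<lambda>t. 1) psi"
  unfolding symbol_def
proof (intro conjI allI)
  show "smooth_on {50<..} psi"
    by (rule smooth_on_subset[OF smooth_psi]) auto
  fix j
  show "\<exists>c. \<forall>t\<ge>T. \<bar>nderiv j psi t\<bar> \<le> c * 1 / t ^ j"
  proof (cases j)
    case 0
    then show ?thesis
      using psi_range ge_T_pos_in_domain by (intro exI[of _ 1]) force
  next
    case (Suc k)
    have sub: "{T..2 * T} \<subseteq> {0<..}"
      using T_gt_100 by auto
    obtain M where M: "0 \<le> M" "\<And>s. s \<in> {T..2 * T} \<Longrightarrow> \<bar>nderiv j psi s\<bar> \<le> M"
      using continuous_on_compact_bound[OF compact_Icc smooth_on_continuous_on[OF smooth_psi sub, of j]]
      by auto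
    have "\<bar>nderiv j psi t\<bar> \<le> M * (2 * T) ^ j * 1 / t ^ j" if t: "T \<le> t" for t
    proof (cases "t \<le> 2 * T")
      case True
      have "t ^ j \<le> (2 * T) ^ j"
        using True ge_T_pos_in_domain[OF t] by (intro power_mono) auto
      then have "M * 1 \<le> M * ((2 * T) ^ j / t ^ j)"
        using M(1) ge_T_pos_in_domain[OF t] by (intro mult_left_mono) auto
      then show ?thesis
        using M(2)[of t] True t by simp
    next
      case False
      have "nderiv j psi t = nderiv j (\<lambda>x. 1) t"
        by (rule nderiv_cong_open[of "{2 * T<..}"]) (use psi_eq_1 False in auto)
      then show ?thesis
        using M(1) T_gt_100 ge_T_pos_in_domain[OF t] Suc by (simp add: nderiv_const)
    qed
    then show ?thesis
      by blast
  qed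
qed

lemma H_fun_eq:
  assumes t: "t \<in> {50<..}"
  shows "H_fun lam psi T t = 4 * (H_core t * psi t)"
proof (cases "t \<le> T")
  case True
  then show ?thesis
    using psi_eq_0 t by (simp add: H_fun_def)
next
  case False
  have t0: "0 < t" "50 < t" and "0 < lam t"
    using t lam_pos by auto
  then have ln_eq: "ln (t / lam t) = ln t - ln (lam t)"
    by (simp add: ln_div)
  have near: "integral {t..2 * t} (\<lambda>s. (nderiv 2 lam s - nderiv 2 lam t) / (s - t)) =
      hilbert_near 0 (nderiv 2 lam) t"
    using hilbert_near_eq_integral[OF t0(1)] by simp
  have far: "integral {2 * t..} (\<lambda>s. nderiv 2 lam s / (s - t)) = hilbert_far 0 (nderiv 2 lam) t"
    using hilbert_far_eq_integral[OF t0(1)] absolutely_integrable_hilbert_far_integrand[OF t0(2), of 0 2]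
    by simp
  show ?thesis
    using False unfolding H_fun_def H_core_def near far ln_eq by (simp add: algebra_simps)
qed

lemma admissible_H_fun: "W.admissible (H_fun lam psi T)"
proof -
  have "symbol (\<lambda>t. lam_weight t * 1) (\<lambda>t. H_core t * psi t)"
    by (rule symbol_mult[OF symbol_H_core symbol_psi weight_lam_weight weight_const]) simp
  then have "symbol lam_weight (\<lambda>t. 4 * (H_core t * psi t) + 0 * (H_core t * psi t))"
    by (intro symbol_linear) (auto intro: weight_lam_weight)
  then have H: "symbol lam_weight (H_fun lam psi T)"
    by (rule symbol_cong) (simp add: H_fun_eq)
  have below: "smooth_on {..<T} (H_fun lam psi T)"
    by (rule smooth_on_cong_open[OF _ _ smooth_on_const[of _ 0]]) (auto simp: H_fun_def)
  have "smooth_on UNIV (H_fun lam psi T)"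
    unfolding smooth_on_def
  proof (intro allI ballI)
    fix k and x :: real
    show "nderiv k (H_fun lam psi T) differentiable (at x)"
    proof (cases "x < T")
      case True
      then show ?thesis
        using below by (simp add: smooth_on_def)
    next
      case False
      then have "x \<in> {50<..}"
        using T_gt_100 by simp
      then show ?thesis
        using symbol_smooth_on[OF H] by (simp add: smooth_on_def)
    qed
  qed
  then show ?thesis
    using H unfolding W.admissible_def W.symbol_def symbol_def by (auto simp: H_fun_def)
qed

lemma v20_hat_eq: "v20_hat lam psi T = (\<lambda>\<xi>. (-1 / pi) * W.vhat (H_fun lam psi T) \<xi>)"
  by (rule ext) (simp add: v20_hat_def W.vhat_def W.sin_transform_def)

lemma nderiv_v20_hat_le_vhat:
  "\<exists>p. W.admissible p \<and> (\<forall>\<xi>>0. \<xi> ^ k * \<bar>nderiv k (v20_hat lam psi T) \<xi>\<bar> \<le> \<bar>W.vhat p \<xi>\<bar>)"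
proof -
  obtain p where p: "W.admissible p" "\<And>\<xi>. 0 < \<xi> \<Longrightarrow> nderiv k (W.vhat (H_fun lam psi T)) \<xi> = W.vhat p \<xi> / \<xi> ^ k"
    using W.nderiv_vhat[OF admissible_H_fun] by blast
  have smooth: "smooth_on {0<..} (W.vhat (H_fun lam psi T))"
    unfolding smooth_on_def using W.nderiv_vhat_differentiable[OF admissible_H_fun] by auto
  have "\<xi> ^ k * \<bar>nderiv k (v20_hat lam psi T) \<xi>\<bar> \<le> \<bar>W.vhat p \<xi>\<bar>" if xi_pos: "0 < \<xi>" for \<xi>
  proof -
    have "nderiv k (v20_hat lam psi T) \<xi> = (-1 / pi) * nderiv k (W.vhat (H_fun lam psi T)) \<xi>"
      unfolding v20_hat_eq by (rule nderiv_cmult[OF _ smooth]) (use xi_pos in auto)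
    then have "\<xi> ^ k * \<bar>nderiv k (v20_hat lam psi T) \<xi>\<bar> = \<bar>W.vhat p \<xi>\<bar> / pi"
      using xi_pos p(2)[OF xi_pos] by (simp add: abs_mult abs_divide)
    also have "\<dots> \<le> \<bar>W.vhat p \<xi>\<bar> / 1"
      using pi_gt3 by (intro divide_left_mono) auto
    finally show ?thesis
      by simp
  qed
  then show ?thesis
    using p(1) by blast
qed

lemma nderiv_v20_hat_differentiable: "0 < \<xi> \<Longrightarrow> nderiv k (v20_hat lam psi T) differentiable (at \<xi>)"
proof -
  have "smooth_on {0<..} (W.vhat (H_fun lam psi T))"
    unfolding smooth_on_def using W.nderiv_vhat_differentiable[OF admissible_H_fun] by auto
  then have "smooth_on {0<..} (v20_hat lam psi T)"
    unfolding v20_hat_eq by (rule smooth_on_cmult[rotated]) simp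
  then show "0 < \<xi> \<Longrightarrow> nderiv k (v20_hat lam psi T) differentiable (at \<xi>)"
    by (simp add: smooth_on_def)
qed

lemma v20_hat_small_xi:
  "\<exists>C. \<forall>\<xi>. 0 < \<xi> \<and> \<xi> \<le> 1/100 \<longrightarrow> \<xi> ^ k * \<bar>nderiv k (v20_hat lam psi T) \<xi>\<bar>
     \<le> C * integral {100..1/\<xi>} (\<lambda>\<sigma>. lam \<sigma> * ln \<sigma> / \<sigma>) + C * lam (1/\<xi>) * ln (1/\<xi>)"
proof -
  obtain p where p: "W.admissible p" "\<And>\<xi>. 0 < \<xi> \<Longrightarrow> \<xi> ^ k * \<bar>nderiv k (v20_hat lam psi T) \<xi>\<bar> \<le> \<bar>W.vhat p \<xi>\<bar>"
    using nderiv_v20_hat_le_vhat by blast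
  obtain C where "\<And>\<xi>. 0 < \<xi> \<Longrightarrow> \<xi> \<le> 1/100 \<Longrightarrow>
      \<bar>W.vhat p \<xi>\<bar> \<le> C * integral {100..1 / \<xi>} (\<lambda>\<sigma>. lam \<sigma> * ln \<sigma> / \<sigma>) + C * lam (1 / \<xi>) * ln (1 / \<xi>)"
    by (fact abs_vhat_small_xi[OF p(1)])
  then show ?thesis
    using p(2) by (meson order_trans)
qed

lemma v20_hat_large_xi:
  "\<exists>C. \<forall>\<xi>>1/100. \<xi> ^ k * \<bar>nderiv k (v20_hat lam psi T) \<xi>\<bar> \<le> C / \<xi> ^ N"
proof -
  obtain p where p: "W.admissible p" "\<And>\<xi>. 0 < \<xi> \<Longrightarrow> \<xi> ^ k * \<bar>nderiv k (v20_hat lam psi T) \<xi>\<bar> \<le> \<bar>W.vhat p \<xi>\<bar>"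
    using nderiv_v20_hat_le_vhat by blast
  obtain c where c: "\<And>\<xi>. 0 < \<xi> \<Longrightarrow> \<bar>W.sin_transform p \<xi>\<bar> \<le> c / \<xi> ^ (2 * N)"
    using W.sin_transform_decay[OF p(1), of N] by blast
  have "\<xi> ^ k * \<bar>nderiv k (v20_hat lam psi T) \<xi>\<bar> \<le> c * 100 ^ (N + 1) / \<xi> ^ N" if \<xi>: "1/100 < \<xi>" for \<xi>
  proof -
    have \<xi>0: "0 < \<xi>" and inv: "1 / \<xi> \<le> 100"
      using \<xi> by (auto simp: field_simps)
    have c0: "0 \<le> c"
      using c[of 1] by simp
    have "\<bar>W.vhat p \<xi>\<bar> \<le> (c / \<xi> ^ (2 * N)) / \<xi>"
      unfolding W.vhat_def using divide_right_mono[OF c[OF \<xi>0], of \<xi>] \<xi>0 by (simp add: abs_divide)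
    also have "\<dots> = (c / \<xi> ^ N) * (1 / \<xi>) ^ (N + 1)"
    proof -
      have "\<xi> ^ (2 * N) = \<xi> ^ N * \<xi> ^ N"
        by (simp add: mult_2 power_add)
      then show ?thesis
        using \<xi>0 by (simp add: field_simps power_add)
    qed
    also have "\<dots> \<le> (c / \<xi> ^ N) * 100 ^ (N + 1)"
      using c0 \<xi>0 inv by (intro mult_left_mono power_mono) auto
    finally show ?thesis
      using p(2)[OF \<xi>0] by simp
  qed
  then show ?thesis
    by blast
qed

end

text \<open>Only condition (i) on the constants of \<open>\<Lambda>\<close>, through its consequence \<open>Cu < 1/2\<close>, enters
  the estimates.\<close>

lemma in_Lambda_imp_lambda_growth:
  assumes "in_Lambda nK nComm nK12 Crho lam T"
  obtains Cl Cu D where "lambda_growth T lam Cl Cu D"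
proof -
  obtain Cl Cu C where lam: "\<forall>t>50. 0 < lam t" "smooth_on {50<..} lam" "100 < T"
    and C: "0 \<le> Cl" "0 \<le> Cu" "0 \<le> C 2" "\<forall>k\<ge>3. 0 \<le> C k" "Cu < 1/30 - Cl/5"
    and log_deriv: "\<forall>t\<ge>T. - Cl / t \<le> nderiv 1 lam t / lam t \<and> nderiv 1 lam t / lam t \<le> Cu / t"
    and higher: "\<forall>k\<ge>2. \<forall>t\<ge>T. \<bar>nderiv k lam t\<bar> / lam t \<le> C k / t ^ k"
    using assms unfolding in_Lambda_def Let_def by blast
  define D where "D k = (if k = 0 then 1 else if k = 1 then max Cl Cu else C k)" for k
  have "\<bar>nderiv k lam t\<bar> \<le> D k * lam t / t ^ k" if t: "T \<le> t" for k t
  proof -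
    have t0: "0 < t" "0 < lam t"
      using t lam by auto
    consider "k = 0" | "k = 1" | "2 \<le> k"
      by linarith
    then show ?thesis
    proof cases
      case 1
      then show ?thesis
        using t0 by (simp add: D_def)
    next
      case 2
      have "Cu / t \<le> max Cl Cu / t" "Cl / t \<le> max Cl Cu / t"
        using t0 by (auto intro: divide_right_mono)
      then have "\<bar>nderiv 1 lam t / lam t\<bar> \<le> max Cl Cu / t"
        using log_deriv[rule_format, OF t] unfolding abs_le_iff by linarith
      then have "\<bar>nderiv 1 lam t\<bar> / lam t \<le> max Cl Cu / t"
        using t0 by (simp add: abs_divide)
      then show ?thesis
        using 2 t0 by (simp add: D_def field_simps)
    next
      case 3
      then have "\<bar>nderiv k lam t\<bar> / lam t \<le> C k / t ^ k" "k \<noteq> 0" "k \<noteq> 1"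
        using higher t by auto
      then show ?thesis
        using t0 by (simp add: D_def field_simps)
    qed
  qed
  moreover have "0 \<le> D k" for k
    using C by (cases "k = 0"; cases "k = 1"; cases "k = 2") (auto simp: D_def)
  ultimately have "lambda_growth T lam Cl Cu D"
    using lam C log_deriv by unfold_locales auto
  then show ?thesis
    by (rule that)
qed

theorem lemma4p4:
  fixes lam psi :: "real \<Rightarrow> real" and T nK nComm nK12 Crho :: real
  assumes "nK \<ge> 0" and "nComm \<ge> 0" and "nK12 \<ge> 0" and "Crho > 0"
    and "in_Lambda nK nComm nK12 Crho lam T"
    and "smooth_on {0<..} psi"
    and "\<forall>x\<ge>0. 0 \<le> psi x \<and> psi x \<le> 1"
    and "\<forall>x. 0 \<le> x \<and> x \<le> T \<longrightarrow> psi x = 0"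
    and "\<forall>x\<ge>2*T. psi x = 1"
  shows "(\<forall>k. \<forall>xi>0. nderiv k (v20_hat lam psi T) differentiable (at xi))
    \<and> (\<forall>k. \<exists>Ck. \<forall>xi. 0 < xi \<and> xi \<le> 1/100 \<longrightarrow>
          xi ^ k * \<bar>nderiv k (v20_hat lam psi T) xi\<bar>
            \<le> Ck * integral {100..1/xi} (\<lambda>\<sigma>. lam \<sigma> * ln \<sigma> / \<sigma>)
               + Ck * lam (1/xi) * ln (1/xi))
    \<and> (\<forall>k. \<forall>N::nat. N \<ge> 1 \<longrightarrow> (\<exists>CkN. \<forall>xi>1/100.
          xi ^ k * \<bar>nderiv k (v20_hat lam psi T) xi\<bar> \<le> CkN / xi ^ N))"
proof -
  obtain Cl Cu D where "lambda_growth T lam Cl Cu D"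
    using in_Lambda_imp_lambda_growth[OF assms(5)] .
  then interpret lambda_cutoff T lam Cl Cu D psi
    using assms(6-9) by (simp add: lambda_cutoff_def lambda_cutoff_axioms_def)
  show ?thesis
    using nderiv_v20_hat_differentiable v20_hat_small_xi v20_hat_large_xi by blast
qed

end
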